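(* Let $p\ge1$, $k\ge1$, $r\in\{0,\dots,p-1\}$, and suppose $(c,\{f_i\}_{i=0}^k)$ belongs to $\mathcal M_r(\alpha,\bar b,\bar\rho)$ for some $\bar b<\infty$ and $\bar\rho<1$. Then $f_i$ is continuous for $i\in\{1,\dots,k-1\}$, and the map $\chi:\mathbb R^p\to\mathbb R^p$ is a homeomorphism. If in addition $f_0$ is bi-Lipschitz with bi-Lipschitz constant $C_{f_0}$, then $\chi$ is also bi-Lipschitz, with a bi-Lipschitz constant that depends only on $\alpha$, $\bar b$, $\bar\rho$ and $C_{f_0}$.
   Context: A map $f$ is bi-Lipschitz with constant $C_0$ if $C_0^{-1}\|x-x'\|\le\|f(x)-f(x')\|\le C_0\|x-x'\|$ for all $x,x'$. Model: for $c\in\mathbb R^p$ and $f_0,\dots,f_k:\mathbb R^p\to\mathbb R^p$ with $f_i(0)=0$, the VAR $f_0(z_t)=c+\sum_{i=1}^k f_i(z_{t-i})+u_t$. (When $k=1$, blocks indexed by $1,\dots,k-1$ are empty.) Define $g_j(z)=-\sum_{i=j+1}^k f_i(z)$; $\pi(z)=-f_0(z)+\sum_{i=1}^k f_i(z)$; $\mathbf g=(g_1^\top,\dots,g_{k-1}^\top)^\top$. $D\in\mathbb R^{p(k-1)\times p(k-1)}$ has $-I_p$ diagonal blocks, $I_p$ blocks immediately above the diagonal, zeros elsewhere; $E=(I_p,0_{p\times p(k-2)})^\top$. $\alpha_\perp$ is $p\times(p-r)$ of rank $p-r$ with $\alpha_\perp^\top\alpha=0$; $\boldsymbol\alpha=\begin{bmatrix}\alpha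 & E^\top\\ 0 & I_{p(k-1)}\end{bmatrix}$; for $\theta:\mathbb R^p\to\mathbb R^r$, $\boldsymbol\theta=(\theta^\top,\mathbf g^\top)^\top$, $\mathbf D_0=\begin{bmatrix}0_{r\times p}&0\\0&D\end{bmatrix}$. $\rho_{JSR}(\mathcal A)=\limsup_{t}\sup\{\rho(M_1\cdots M_t)^{1/t}:M_s\in\mathcal A\}$. Class $\mathcal M_r(\alpha,\bar b,\bar\rho)$ ($\alpha\in\mathbb R^{p\times r}$ of rank $r$): (i) $f_0$ is a homeomorphism of $\mathbb R^p$; (ii) there exist $\mu\in\mathbb R^r$, $\theta:\mathbb R^p\to\mathbb R^r$ with $c=\alpha\mu$, $\pi=\alpha\theta$; (iii) there is a closed $\mathcal B\subset\mathbb R^{kp\times[p(k-1)+r]}$ with $\max_{\mathcal B}\|\boldsymbol\beta\|\le\bar b$ and $\rho_{JSR}(\{I+\boldsymbol\beta^\top\boldsymbol\alpha:\boldsymbol\beta\in\mathcal B\})\le\bar\rho$, such that for all $\mathbf z=(z^\top,\boldsymbol\zeta^\top)^\top,\mathbf z'\in\mathbb R^{kp}$ some $\boldsymbol\beta\in\mathcal B$ satisfies $[\boldsymbol\theta(f_0^{-1}(z))+\mathbf D_0\mathbf z]-[\boldsymbol\theta(f_0^{-1}(z'))+\mathbf D_0\mathbf z']=\boldsymbol\beta^\top(\mathbf z-\mathbf z')$. $\psi(z)=\alpha_\perp^\top[f_0(z)-\sum_{i=1}^{k-1}g_i(z)]$, $\chi(z)=(\psi(z)^\top,\theta(z)^\top)^\top$.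 *)

theory Defs
  imports "HOL-Analysis.Analysis" "Jordan_Normal_Form.Spectral_Radius" "Jordan_Normal_Form.DL_Rank"
begin

text \<open>Vectors of R^n are rendered as elements of carrier_vec n (type real vec),
  matrices of R^(n x m) as elements of carrier_mat n m (type real mat).\<close>

definition vnorm :: "real vec \<Rightarrow> real" where
  "vnorm v = sqrt (v \<bullet> v)"

definition mnorm :: "real mat \<Rightarrow> real" where
  "mnorm A = Sup {vnorm (A *\<^sub>v x) | x. x \<in> carrier_vec (dim_col A) \<and> vnorm x \<le> 1}"

definition sprad :: "real mat \<Rightarrow> real" where
  "sprad A = (if dim_row A = 0 then 0 else spectral_radius (map_mat complex_of_real A))"

definition jsr :: "nat \<Rightarrow> real mat set \<Rightarrow> ereal" where
  "jsr n \<A> = limsup (\<lambda>t. Sup ((\<lambda>Ms. ereal (root t (sprad (foldr (*) Ms (1\<^sub>m n)))))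
                          ` {Ms. length Ms = t \<and> set Ms \<subseteq> \<A>}))"

definition closed_mat_set :: "nat \<Rightarrow> nat \<Rightarrow> real mat set \<Rightarrow> bool" where
  "closed_mat_set n m B \<longleftrightarrow> B \<subseteq> carrier_mat n m \<and>
     (\<forall>X M. (\<forall>t. X t \<in> B) \<and> M \<in> carrier_mat n m \<and>
        (\<forall>i<n. \<forall>j<m. (\<lambda>t. X t $$ (i,j)) \<longlonglongrightarrow> M $$ (i,j)) \<longrightarrow> M \<in> B)"

definition vcont_on :: "nat \<Rightarrow> (real vec \<Rightarrow> real vec) \<Rightarrow> bool" where
  "vcont_on p g \<longleftrightarrow> (\<forall>x\<in>carrier_vec p. \<forall>e>0. \<exists>d>0. \<forall>y\<in>carrier_vec p.
      vnorm (y - x) < d \<longrightarrow> vnorm (g y - g x) < e)"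

definition vhomeo :: "nat \<Rightarrow> (real vec \<Rightarrow> real vec) \<Rightarrow> bool" where
  "vhomeo p g \<longleftrightarrow> bij_betw g (carrier_vec p) (carrier_vec p) \<and> vcont_on p g
      \<and> vcont_on p (the_inv_into (carrier_vec p) g)"

definition bilip :: "nat \<Rightarrow> (real vec \<Rightarrow> real vec) \<Rightarrow> real \<Rightarrow> bool" where
  "bilip p g C \<longleftrightarrow> (\<forall>x\<in>carrier_vec p. \<forall>y\<in>carrier_vec p.
      inverse C * vnorm (x - y) \<le> vnorm (g x - g y) \<and> vnorm (g x - g y) \<le> C * vnorm (x - y))"

definition gmap :: "nat \<Rightarrow> nat \<Rightarrow> (nat \<Rightarrow> real vec \<Rightarrow> real vec) \<Rightarrow> nat \<Rightarrow> real vec \<Rightarrow> real vec" where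
  "gmap p k f j z = vec p (\<lambda>l. - (\<Sum>i\<in>{j+1..k}. f i z $ l))"

definition pimap :: "nat \<Rightarrow> nat \<Rightarrow> (nat \<Rightarrow> real vec \<Rightarrow> real vec) \<Rightarrow> real vec \<Rightarrow> real vec" where
  "pimap p k f z = vec p (\<lambda>l. - f 0 z $ l + (\<Sum>i\<in>{1..k}. f i z $ l))"

text \<open>bold g = (g_1, ..., g_{k-1}) stacked, in R^(p(k-1)).\<close>
definition gvec :: "nat \<Rightarrow> nat \<Rightarrow> (nat \<Rightarrow> real vec \<Rightarrow> real vec) \<Rightarrow> real vec \<Rightarrow> real vec" where
  "gvec p k f z = vec (p * (k - 1)) (\<lambda>a. gmap p k f (a div p + 1) z $ (a mod p))"

definition Dmat :: "nat \<Rightarrow> nat \<Rightarrow> real mat" where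
  "Dmat p k = mat (p * (k - 1)) (p * (k - 1)) (\<lambda>(a,b).
     if a mod p = b mod p then (if a div p = b div p then -1
        else if b div p = a div p + 1 then 1 else 0) else 0)"

definition Etr :: "nat \<Rightarrow> nat \<Rightarrow> real mat" where
  "Etr p k = mat p (p * (k - 1)) (\<lambda>(i,j). if i = j then 1 else 0)"

definition bold_alpha :: "nat \<Rightarrow> nat \<Rightarrow> nat \<Rightarrow> real mat \<Rightarrow> real mat" where
  "bold_alpha p k r \<alpha> = four_block_mat \<alpha> (Etr p k) (0\<^sub>m (p * (k - 1)) r) (1\<^sub>m (p * (k - 1)))"

definition D0mat :: "nat \<Rightarrow> nat \<Rightarrow> nat \<Rightarrow> real mat" where
  "D0mat p k r = four_block_mat (0\<^sub>m r p) (0\<^sub>m r (p * (k - 1))) (0\<^sub>m (p * (k - 1)) p) (Dmat p k)"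

definition bold_theta :: "nat \<Rightarrow> nat \<Rightarrow> (nat \<Rightarrow> real vec \<Rightarrow> real vec) \<Rightarrow> (real vec \<Rightarrow> real vec) \<Rightarrow> real vec \<Rightarrow> real vec" where
  "bold_theta p k f \<theta> x = \<theta> x @\<^sub>v gvec p k f x"

text \<open>Membership of (c, f_0..f_k) in M_r(alpha, bbar, rhobar), with theta the map of condition (ii).\<close>
definition in_class :: "nat \<Rightarrow> nat \<Rightarrow> nat \<Rightarrow> real mat \<Rightarrow> real \<Rightarrow> real \<Rightarrow> real vec
      \<Rightarrow> (nat \<Rightarrow> real vec \<Rightarrow> real vec) \<Rightarrow> (real vec \<Rightarrow> real vec) \<Rightarrow> bool" where
  "in_class p k r \<alpha> bbar rhobar c f \<theta> \<longleftrightarrow>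
     vhomeo p (f 0)
   \<and> (\<exists>\<mu>\<in>carrier_vec r. c = \<alpha> *\<^sub>v \<mu>)
   \<and> (\<forall>z\<in>carrier_vec p. \<theta> z \<in> carrier_vec r \<and> pimap p k f z = \<alpha> *\<^sub>v \<theta> z)
   \<and> (\<exists>B. closed_mat_set (k * p) (p * (k - 1) + r) B
        \<and> (\<forall>\<beta>\<in>B. mnorm \<beta> \<le> bbar)
        \<and> jsr (p * (k - 1) + r) {1\<^sub>m (p * (k - 1) + r) + transpose_mat \<beta> * bold_alpha p k r \<alpha> | \<beta>. \<beta> \<in> B}
            \<le> ereal rhobar
        \<and> (\<forall>z\<in>carrier_vec (k * p). \<forall>z'\<in>carrier_vec (k * p). \<exists>\<beta>\<in>B.
            (bold_theta p k f \<theta> (the_inv_into (carrier_vec p) (f 0) (vec_first z p)) + D0mat p k r *\<^sub>v z)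
          - (bold_theta p k f \<theta> (the_inv_into (carrier_vec p) (f 0) (vec_first z' p)) + D0mat p k r *\<^sub>v z')
          = transpose_mat \<beta> *\<^sub>v (z - z')))"

definition psi_map :: "nat \<Rightarrow> nat \<Rightarrow> real mat \<Rightarrow> (nat \<Rightarrow> real vec \<Rightarrow> real vec) \<Rightarrow> real vec \<Rightarrow> real vec" where
  "psi_map p k \<alpha>perp f z = transpose_mat \<alpha>perp *\<^sub>v vec p (\<lambda>l. f 0 z $ l - (\<Sum>i\<in>{1..k-1}. gmap p k f i z $ l))"

definition chi_map :: "nat \<Rightarrow> nat \<Rightarrow> real mat \<Rightarrow> (nat \<Rightarrow> real vec \<Rightarrow> real vec) \<Rightarrow> (real vec \<Rightarrow> real vec) \<Rightarrow> real vec \<Rightarrow> real vec" where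
  "chi_map p k \<alpha>perp f \<theta> z = psi_map p k \<alpha>perp f z @\<^sub>v \<theta> z"

end

theory Submission
  imports Defs "HOL-Homology.Invariance_of_Domain"
begin

text \<open>Write \<open>w = f\<^sub>0 z\<close>. Then \<open>\<chi> z = \<Psi> w\<close> with
  \<open>\<Psi> w = (\<alpha>\<^sub>\<bottom>\<^sup>T (w - S (\<^bold>g (f\<^sub>0\<^sup>-\<^sup>1 w))), \<theta> (f\<^sub>0\<^sup>-\<^sup>1 w))\<close>, where \<open>S\<close> adds up the
  \<open>k - 1\<close> blocks of length \<open>p\<close> of a vector. Condition (iii) at the points \<open>(w, 0)\<close>, \<open>(w', 0)\<close> shows
  that \<open>\<theta> \<circ> f\<^sub>0\<^sup>-\<^sup>1\<close> and \<open>\<^bold>g \<circ> f\<^sub>0\<^sup>-\<^sup>1\<close> are \<open>b\<close>-Lipschitz, so \<open>\<Psi>\<close> is Lipschitz. At the points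
  \<open>(w, \<xi>)\<close>, \<open>(w', 0)\<close>, with \<open>\<xi>\<close> the tail sums of the increment of \<open>\<^bold>g \<circ> f\<^sub>0\<^sup>-\<^sup>1\<close>, it expresses
  \<open>w - w'\<close> through \<open>\<beta>\<^sup>T \<^bold>\<alpha>\<close>; since \<open>I + \<beta>\<^sup>T \<^bold>\<alpha>\<close> has spectral radius at most \<open>\<rho> < 1\<close> and \<open>\<beta>\<close>
  is bounded, \<open>\<beta>\<^sup>T \<^bold>\<alpha>\<close> is uniformly invertible (determinant and adjugate bounds), and together with
  the splitting \<open>\<real>\<^sup>p = range \<alpha>\<^sub>\<bottom> \<oplus> range \<alpha>\<close> this makes \<open>\<Psi>\<close> co-Lipschitz with a constant that
  depends only on \<open>\<alpha>, \<alpha>\<^sub>\<bottom>, b, \<rho>\<close>. A continuous co-Lipschitz self-map of \<open>\<real>\<^sup>p\<close> is onto by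
  invariance of domain, so \<open>\<Psi>\<close>, and with it \<open>\<chi> = \<Psi> \<circ> f\<^sub>0\<close>, is a homeomorphism, and \<open>\<chi>\<close> is
  bi-Lipschitz when \<open>f\<^sub>0\<close> is. Finally \<open>f\<^sub>i = g\<^sub>i - g\<^sub>i\<^sub>-\<^sub>1\<close> with \<open>g\<^sub>0 = -\<alpha> \<theta> - f\<^sub>0\<close>, and each
  \<open>g\<^sub>j\<close> is a Lipschitz map composed with \<open>f\<^sub>0\<close>, so the \<open>f\<^sub>i\<close> are continuous.\<close>

lemma vnorm_eq_L2_set: "vnorm v = L2_set (\<lambda>i. v $ i) {0..<dim_vec v}"
  unfolding vnorm_def L2_set_def scalar_prod_def by (simp add: power2_eq_square)

lemma vnorm_nonneg: "0 \<le> vnorm v"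
  unfolding vnorm_eq_L2_set by (rule L2_set_nonneg)

lemma abs_index_le_vnorm: "i < dim_vec v \<Longrightarrow> \<bar>v $ i\<bar> \<le> vnorm v"
  unfolding vnorm_eq_L2_set using member_le_L2_set[of "{0..<dim_vec v}" i "\<lambda>i. \<bar>v $ i\<bar>"]
  by (simp add: L2_set_def)

lemma vnorm_le_sum_abs: "vnorm v \<le> (\<Sum>i<dim_vec v. \<bar>v $ i\<bar>)"
  unfolding vnorm_eq_L2_set using L2_set_le_sum_abs[of "\<lambda>i. v $ i" "{0..<dim_vec v}"]
  by (simp add: lessThan_atLeast0)

lemma vnorm_add_le: "dim_vec u = dim_vec v \<Longrightarrow> vnorm (u + v) \<le> vnorm u + vnorm v"
  unfolding vnorm_eq_L2_set using L2_set_triangle_ineq[of "\<lambda>i. u $ i" "\<lambda>i. v $ i" "{0..<dim_vec v}"]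
  by (simp add: L2_set_def)

lemma vnorm_zero_vec [simp]: "vnorm (0\<^sub>v n) = 0"
  by (simp add: vnorm_def)

lemma vnorm_eq_0_iff: "vnorm v = 0 \<longleftrightarrow> v = 0\<^sub>v (dim_vec v)"
proof
  assume "vnorm v = 0"
  then show "v = 0\<^sub>v (dim_vec v)"
    using abs_index_le_vnorm[of _ v] by (intro eq_vecI) fastforce+
next
  assume "v = 0\<^sub>v (dim_vec v)"
  then show "vnorm v = 0" by (metis vnorm_zero_vec)
qed

lemma vnorm_diff_eq_0_iff:
  assumes "u \<in> carrier_vec n" "v \<in> carrier_vec n"
  shows "vnorm (u - v) = 0 \<longleftrightarrow> u = v"
  using assms by (auto simp: vnorm_eq_0_iff vec_eq_iff)

lemma vnorm_smult: "vnorm (a \<cdot>\<^sub>v v) = \<bar>a\<bar> * vnorm v"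
proof -
  have "(a \<cdot>\<^sub>v v) \<bullet> (a \<cdot>\<^sub>v v) = a\<^sup>2 * (v \<bullet> v)"
    unfolding scalar_prod_def by (simp add: sum_distrib_left power2_eq_square algebra_simps)
  then show ?thesis unfolding vnorm_def by (simp add: real_sqrt_mult)
qed

lemma vnorm_uminus: "vnorm (- v) = vnorm v"
proof -
  have "- v = (-1) \<cdot>\<^sub>v v" by (intro eq_vecI) auto
  then show ?thesis using vnorm_smult[of "-1" v] by simp
qed

lemma vnorm_minus_commute: "dim_vec u = dim_vec v \<Longrightarrow> vnorm (u - v) = vnorm (v - u)"
proof -
  assume "dim_vec u = dim_vec v"
  then have "u - v = - (v - u)" by (intro eq_vecI) auto
  then show ?thesis by (simp add: vnorm_uminus)
qed

lemma vnorm_triangle_diff: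
  "dim_vec u = dim_vec v \<Longrightarrow> dim_vec w = dim_vec v \<Longrightarrow> vnorm (u - w) \<le> vnorm (u - v) + vnorm (v - w)"
proof -
  assume d: "dim_vec u = dim_vec v" "dim_vec w = dim_vec v"
  have "u - w = (u - v) + (v - w)" by (intro eq_vecI) (auto simp: d)
  then show ?thesis using vnorm_add_le[of "u - v" "v - w"] d by simp
qed

lemma vnorm_diff_le: "dim_vec u = dim_vec v \<Longrightarrow> vnorm (u - v) \<le> vnorm u + vnorm v"
proof -
  assume d: "dim_vec u = dim_vec v"
  have "u - v = u + (- v)" by (intro eq_vecI) (auto simp: d)
  then show ?thesis using vnorm_add_le[of u "- v"] d by (simp add: vnorm_uminus)
qed

lemma vnorm_power2: "(vnorm v)\<^sup>2 = v \<bullet> v"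
  unfolding vnorm_def scalar_prod_def by (simp add: sum_nonneg)

lemma vnorm_append: "vnorm (u @\<^sub>v v) = sqrt ((vnorm u)\<^sup>2 + (vnorm v)\<^sup>2)"
  unfolding vnorm_power2 by (simp add: vnorm_def scalar_prod_append[of _ "dim_vec u" _ "dim_vec v"])

lemma vnorm_le_vnorm_append_left: "vnorm u \<le> vnorm (u @\<^sub>v v)"
  unfolding vnorm_append by (simp add: real_le_rsqrt vnorm_nonneg)

lemma vnorm_le_vnorm_append_right: "vnorm v \<le> vnorm (u @\<^sub>v v)"
  unfolding vnorm_append by (simp add: real_le_rsqrt vnorm_nonneg)

lemma vnorm_append_le: "vnorm (u @\<^sub>v v) \<le> vnorm u + vnorm v"
  unfolding vnorm_append using vnorm_nonneg[of u] vnorm_nonneg[of v]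
  by (simp add: sqrt_sum_squares_le_sum)

lemma vnorm_append_zero_vec [simp]: "vnorm (v @\<^sub>v 0\<^sub>v m) = vnorm v"
  unfolding vnorm_append by (simp add: vnorm_nonneg)

lemma abs_scalar_prod_le_vnorm:
  assumes "dim_vec u = dim_vec v"
  shows "\<bar>u \<bullet> v\<bar> \<le> vnorm u * vnorm v"
proof -
  have "\<bar>u \<bullet> v\<bar> \<le> (\<Sum>i\<in>{0..<dim_vec v}. \<bar>u $ i\<bar> * \<bar>v $ i\<bar>)"
    unfolding scalar_prod_def by (rule order_trans[OF sum_abs]) (simp add: abs_mult)
  also have "\<dots> \<le> L2_set (\<lambda>i. u $ i) {0..<dim_vec v} * L2_set (\<lambda>i. v $ i) {0..<dim_vec v}"
    by (rule L2_set_mult_ineq)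
  finally show ?thesis using assms by (simp add: vnorm_eq_L2_set)
qed

lemma vnorm_le_of_slice:
  fixes u v :: "real vec"
  assumes "dim_vec u = m" "s + m \<le> dim_vec v" "\<And>l. l < m \<Longrightarrow> u $ l = v $ (s + l)"
  shows "vnorm u \<le> vnorm v"
proof -
  have "u \<bullet> u = (\<Sum>l<m. (v $ (s + l))\<^sup>2)"
    using assms by (simp add: scalar_prod_def lessThan_atLeast0 power2_eq_square)
  also have "\<dots> = (\<Sum>i\<in>{s..<s + m}. (v $ i)\<^sup>2)"
    by (rule sum.reindex_bij_witness[of _ "\<lambda>i. i - s" "\<lambda>l. s + l"]) auto
  also have "\<dots> \<le> (\<Sum>i\<in>{0..<dim_vec v}. (v $ i)\<^sup>2)"
    using assms(2) by (intro sum_mono2) auto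
  also have "\<dots> = v \<bullet> v" by (simp add: scalar_prod_def power2_eq_square)
  finally show ?thesis unfolding vnorm_def by simp
qed

lemma mult_mat_vec_zero_vec [simp]:
  "(A :: 'a :: semiring_0 mat) \<in> carrier_mat m n \<Longrightarrow> A *\<^sub>v 0\<^sub>v n = 0\<^sub>v m"
  by (intro eq_vecI) (auto simp: scalar_prod_def)

lemma zero_mat_mult_vec [simp]:
  "v \<in> carrier_vec n \<Longrightarrow> (0\<^sub>m m n :: 'a :: semiring_0 mat) *\<^sub>v v = 0\<^sub>v m"
  by (intro eq_vecI) (auto simp: scalar_prod_def)

lemma smult_mat_mult_vec:
  "dim_vec v = dim_col A \<Longrightarrow> (a \<cdot>\<^sub>m A) *\<^sub>v v = a \<cdot>\<^sub>v (A *\<^sub>v (v :: 'a :: comm_semiring_0 vec))"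
  by (intro eq_vecI) (auto simp: scalar_prod_def sum_distrib_left ac_simps)

lemma vec_first_append_vec: "v \<in> carrier_vec n \<Longrightarrow> vec_first (v @\<^sub>v w) n = v"
  by (intro eq_vecI) (auto simp: vec_first_def)

lemma append_vec_diff:
  fixes a a' b b' :: "'a :: ab_group_add vec"
  assumes "a \<in> carrier_vec n" "a' \<in> carrier_vec n" "b \<in> carrier_vec m" "b' \<in> carrier_vec m"
  shows "(a @\<^sub>v b) - (a' @\<^sub>v b') = (a - a') @\<^sub>v (b - b')"
  using assms by (intro eq_vecI) auto

definition mat_abs_sum :: "real mat \<Rightarrow> real" where
  "mat_abs_sum A = (\<Sum>i<dim_row A. \<Sum>j<dim_col A. \<bar>A $$ (i,j)\<bar>)"

lemma mat_abs_sum_nonneg: "0 \<le> mat_abs_sum A"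
  unfolding mat_abs_sum_def by (auto intro!: sum_nonneg)

lemma vnorm_mult_mat_vec_le:
  assumes "dim_vec v = dim_col A"
  shows "vnorm (A *\<^sub>v v) \<le> mat_abs_sum A * vnorm v"
proof -
  have row: "\<bar>(A *\<^sub>v v) $ i\<bar> \<le> (\<Sum>j<dim_col A. \<bar>A $$ (i,j)\<bar>) * vnorm v" if "i < dim_row A" for i
  proof -
    have "\<bar>(A *\<^sub>v v) $ i\<bar> = \<bar>\<Sum>j<dim_col A. A $$ (i,j) * v $ j\<bar>"
      using that assms by (simp add: scalar_prod_def lessThan_atLeast0)
    also have "\<dots> \<le> (\<Sum>j<dim_col A. \<bar>A $$ (i,j)\<bar> * vnorm v)"
      by (rule order_trans[OF sum_abs], rule sum_mono)
        (use assms abs_index_le_vnorm[of _ v] in \<open>auto simp: abs_mult intro!: mult_left_mono\<close>)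
    finally show ?thesis by (simp add: sum_distrib_right)
  qed
  have "vnorm (A *\<^sub>v v) \<le> (\<Sum>i<dim_row A. \<bar>(A *\<^sub>v v) $ i\<bar>)"
    using vnorm_le_sum_abs[of "A *\<^sub>v v"] by simp
  also have "\<dots> \<le> (\<Sum>i<dim_row A. (\<Sum>j<dim_col A. \<bar>A $$ (i,j)\<bar>) * vnorm v)"
    by (intro sum_mono row) simp
  finally show ?thesis unfolding mat_abs_sum_def by (simp add: sum_distrib_right)
qed

lemma mnorm_upper:
  assumes "A \<in> carrier_mat m n" "y \<in> carrier_vec n" "vnorm y \<le> 1"
  shows "vnorm (A *\<^sub>v y) \<le> mnorm A"
proof -
  have "bdd_above {vnorm (A *\<^sub>v x) | x. x \<in> carrier_vec (dim_col A) \<and> vnorm x \<le> 1}"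
  proof (rule bdd_aboveI)
    fix s assume "s \<in> {vnorm (A *\<^sub>v x) | x. x \<in> carrier_vec (dim_col A) \<and> vnorm x \<le> 1}"
    then obtain x where "x \<in> carrier_vec (dim_col A)" "vnorm x \<le> 1" "s = vnorm (A *\<^sub>v x)"
      by blast
    then have "s \<le> mat_abs_sum A * vnorm x" using vnorm_mult_mat_vec_le[of x A] by simp
    also have "\<dots> \<le> mat_abs_sum A"
      using \<open>vnorm x \<le> 1\<close> vnorm_nonneg[of x] mat_abs_sum_nonneg[of A] by (simp add: mult_left_le)
    finally show "s \<le> mat_abs_sum A" .
  qed
  then show ?thesis
    unfolding mnorm_def using assms by (intro cSup_upper) auto
qed

lemma mnorm_nonneg: "A \<in> carrier_mat m n \<Longrightarrow> 0 \<le> mnorm A"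
  using mnorm_upper[of A m n "0\<^sub>v n"] vnorm_nonneg[of "A *\<^sub>v 0\<^sub>v n"] by simp

lemma vnorm_mult_le_mnorm:
  assumes A: "A \<in> carrier_mat m n" and x: "x \<in> carrier_vec n"
  shows "vnorm (A *\<^sub>v x) \<le> mnorm A * vnorm x"
proof (cases "vnorm x = 0")
  case True
  then show ?thesis using A x by (simp add: vnorm_eq_0_iff)
next
  case False
  then have pos: "vnorm x > 0" using vnorm_nonneg[of x] by auto
  define y where "y = (1 / vnorm x) \<cdot>\<^sub>v x"
  have y: "y \<in> carrier_vec n" "vnorm y = 1" unfolding y_def using x pos by (auto simp: vnorm_smult)
  have "A *\<^sub>v y = (1 / vnorm x) \<cdot>\<^sub>v (A *\<^sub>v x)" unfolding y_def using A x by (simp add: mult_mat_vec)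
  then have "vnorm (A *\<^sub>v y) = vnorm (A *\<^sub>v x) / vnorm x" using pos by (simp add: vnorm_smult)
  with mnorm_upper[OF A y(1)] y(2) pos show ?thesis by (simp add: divide_le_eq mult.commute)
qed

lemma vnorm_transpose_mult_le_mnorm:
  assumes A: "A \<in> carrier_mat m n" and u: "u \<in> carrier_vec m"
  shows "vnorm (transpose_mat A *\<^sub>v u) \<le> mnorm A * vnorm u"
proof -
  let ?w = "transpose_mat A *\<^sub>v u"
  have w: "?w \<in> carrier_vec n" using A by (intro carrier_vecI) simp
  have "(vnorm ?w)\<^sup>2 = u \<bullet> (A *\<^sub>v ?w)"
    unfolding vnorm_power2 by (rule transpose_vec_mult_scalar[OF A w u])
  also have "\<dots> \<le> vnorm u * vnorm (A *\<^sub>v ?w)"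
    using abs_scalar_prod_le_vnorm[of u "A *\<^sub>v ?w"] A u by auto
  also have "\<dots> \<le> vnorm u * (mnorm A * vnorm ?w)"
    by (rule mult_left_mono[OF vnorm_mult_le_mnorm[OF A w] vnorm_nonneg])
  finally have "vnorm ?w * vnorm ?w \<le> (mnorm A * vnorm u) * vnorm ?w"
    by (simp add: power2_eq_square ac_simps)
  then show ?thesis
  proof (cases "vnorm ?w = 0")
    case True
    then show ?thesis using mnorm_nonneg[OF A] vnorm_nonneg[of u] by simp
  next
    case False
    then have "vnorm ?w > 0" using vnorm_nonneg[of ?w] by linarith
    with \<open>vnorm ?w * vnorm ?w \<le> (mnorm A * vnorm u) * vnorm ?w\<close> show ?thesis by simp
  qed
qed

lemma vcont_on_cong: "vcont_on p g \<Longrightarrow> (\<And>z. z \<in> carrier_vec p \<Longrightarrow> h z = g z) \<Longrightarrow> vcont_on p h"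
  unfolding vcont_on_def by simp

lemma vcont_on_compose:
  assumes f: "vcont_on p f" "\<forall>z\<in>carrier_vec p. f z \<in> carrier_vec p" and g: "vcont_on p g"
  shows "vcont_on p (\<lambda>z. g (f z))"
  unfolding vcont_on_def
proof (intro ballI allI impI)
  fix x :: "real vec" and e :: real assume x: "x \<in> carrier_vec p" and e: "e > 0"
  obtain d where d: "d > 0" "\<forall>y\<in>carrier_vec p. vnorm (y - f x) < d \<longrightarrow> vnorm (g y - g (f x)) < e"
    using g f(2) x e unfolding vcont_on_def by blast
  obtain d' where "d' > 0" "\<forall>y\<in>carrier_vec p. vnorm (y - x) < d' \<longrightarrow> vnorm (f y - f x) < d"
    using f(1) x d(1) unfolding vcont_on_def by blast
  then show "\<exists>d>0. \<forall>y\<in>carrier_vec p. vnorm (y - x) < d \<longrightarrow> vnorm (g (f y) - g (f x)) < e"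
    using d(2) f(2) by blast
qed

lemma lipschitz_imp_vcont_on:
  assumes "\<forall>w\<in>carrier_vec p. \<forall>w'\<in>carrier_vec p. vnorm (g w - g w') \<le> L * vnorm (w - w')"
  shows "vcont_on p g"
  unfolding vcont_on_def
proof (intro ballI allI impI)
  fix x :: "real vec" and e :: real assume x: "x \<in> carrier_vec p" and e: "e > 0"
  show "\<exists>d>0. \<forall>y\<in>carrier_vec p. vnorm (y - x) < d \<longrightarrow> vnorm (g y - g x) < e"
  proof (intro exI[of _ "e / (\<bar>L\<bar> + 1)"] conjI ballI impI)
    fix y assume y: "y \<in> carrier_vec p" "vnorm (y - x) < e / (\<bar>L\<bar> + 1)"
    have "vnorm (g y - g x) \<le> \<bar>L\<bar> * vnorm (y - x)"
      using assms x y(1) abs_ge_self[of L] vnorm_nonneg[of "y - x"]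
      by (meson mult_right_mono order_trans)
    also have "\<dots> \<le> \<bar>L\<bar> * (e / (\<bar>L\<bar> + 1))" using y(2) by (intro mult_left_mono) auto
    also have "\<dots> < e" using e by (simp add: field_simps)
    finally show "vnorm (g y - g x) < e" .
  qed (use e in simp)
qed

lemma vcont_on_of_sum_bound:
  assumes g: "vcont_on p g" and h: "vcont_on p h"
    and bound: "\<And>x y. x \<in> carrier_vec p \<Longrightarrow> y \<in> carrier_vec p \<Longrightarrow>
       vnorm (F y - F x) \<le> vnorm (g y - g x) + vnorm (h y - h x)"
  shows "vcont_on p F"
  unfolding vcont_on_def
proof (intro ballI allI impI)
  fix x :: "real vec" and e :: real assume x: "x \<in> carrier_vec p" and e: "e > 0"
  obtain d1 where d1: "d1 > 0" "\<forall>y\<in>carrier_vec p. vnorm (y - x) < d1 \<longrightarrow> vnorm (g y - g x) < e / 2"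
    using g x e unfolding vcont_on_def by (meson half_gt_zero)
  obtain d2 where d2: "d2 > 0" "\<forall>y\<in>carrier_vec p. vnorm (y - x) < d2 \<longrightarrow> vnorm (h y - h x) < e / 2"
    using h x e unfolding vcont_on_def by (meson half_gt_zero)
  show "\<exists>d>0. \<forall>y\<in>carrier_vec p. vnorm (y - x) < d \<longrightarrow> vnorm (F y - F x) < e"
  proof (intro exI[of _ "min d1 d2"] conjI ballI impI)
    fix y assume "y \<in> carrier_vec p" "vnorm (y - x) < min d1 d2"
    then show "vnorm (F y - F x) < e" using d1 d2 bound[OF x] by fastforce
  qed (use d1 d2 in simp)
qed

lemma vcont_on_diff:
  assumes "vcont_on p g" "vcont_on p h" "\<forall>z\<in>carrier_vec p. g z \<in> carrier_vec q \<and> h z \<in> carrier_vec q"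
  shows "vcont_on p (\<lambda>z. g z - h z)"
proof (rule vcont_on_of_sum_bound[OF assms(1,2)])
  fix x y :: "real vec" assume "x \<in> carrier_vec p" "y \<in> carrier_vec p"
  then have c: "g x \<in> carrier_vec q" "h x \<in> carrier_vec q" "g y \<in> carrier_vec q" "h y \<in> carrier_vec q"
    using assms(3) by auto
  then have "(g y - h y) - (g x - h x) = (g y - g x) - (h y - h x)" by (intro eq_vecI) auto
  then show "vnorm ((g y - h y) - (g x - h x)) \<le> vnorm (g y - g x) + vnorm (h y - h x)"
    using vnorm_diff_le[of "g y - g x" "h y - h x"] c by simp
qed

lemma vec_Cauchy_convergent:
  assumes v: "\<And>m. v m \<in> carrier_vec n"
    and Cauchy: "\<And>e. e > 0 \<Longrightarrow> \<exists>M. \<forall>m\<ge>M. \<forall>l\<ge>M. vnorm (v m - v l) < e"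
  obtains x where "x \<in> carrier_vec n" "(\<lambda>m. vnorm (v m - x)) \<longlonglongrightarrow> 0"
proof -
  have "Cauchy (\<lambda>m. v m $ i)" if i: "i < n" for i
  proof (rule metric_CauchyI)
    fix e :: real assume "e > 0"
    then obtain M where M: "\<forall>m\<ge>M. \<forall>l\<ge>M. vnorm (v m - v l) < e" using Cauchy by blast
    have "dist (v m $ i) (v l $ i) < e" if "m \<ge> M" "l \<ge> M" for m l
    proof -
      have "dist (v m $ i) (v l $ i) = \<bar>(v m - v l) $ i\<bar>"
        using v[of m] v[of l] i by (simp add: dist_real_def)
      also have "\<dots> \<le> vnorm (v m - v l)" using v[of l] i by (intro abs_index_le_vnorm) simp
      finally show ?thesis using M that by fastforce
    qed
    then show "\<exists>M. \<forall>m\<ge>M. \<forall>l\<ge>M. dist (v m $ i) (v l $ i) < e" by blast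
  qed
  then have conv: "(\<lambda>m. v m $ i) \<longlonglongrightarrow> lim (\<lambda>m. v m $ i)" if "i < n" for i
    using that by (simp add: Cauchy_convergent_iff convergent_LIMSEQ_iff)
  define x where "x = vec n (\<lambda>i. lim (\<lambda>m. v m $ i))"
  have "(\<lambda>m. vnorm (v m - x)) \<longlonglongrightarrow> 0"
  proof (rule tendsto_sandwich[of "\<lambda>m. 0" _ _ "\<lambda>m. \<Sum>i<n. \<bar>v m $ i - x $ i\<bar>"])
    show "\<forall>\<^sub>F m in sequentially. 0 \<le> vnorm (v m - x)" by (simp add: vnorm_nonneg)
    show "\<forall>\<^sub>F m in sequentially. vnorm (v m - x) \<le> (\<Sum>i<n. \<bar>v m $ i - x $ i\<bar>)"
      using vnorm_le_sum_abs[of "v m - x" for m] v by (simp add: x_def)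
    have "(\<lambda>m. \<Sum>i<n. \<bar>v m $ i - x $ i\<bar>) \<longlonglongrightarrow> (\<Sum>i<n. 0)"
      by (intro tendsto_sum tendsto_rabs_zero LIM_zero) (simp add: x_def conv)
    then show "(\<lambda>m. \<Sum>i<n. \<bar>v m $ i - x $ i\<bar>) \<longlonglongrightarrow> 0" by simp
  qed simp
  moreover have "x \<in> carrier_vec n" by (simp add: x_def)
  ultimately show thesis by (rule that[rotated])
qed

lemma vcont_on_imp_tendsto:
  assumes F: "vcont_on n F" and x: "x \<in> carrier_vec n" and v: "\<And>m. v m \<in> carrier_vec n"
    and lim: "(\<lambda>m. vnorm (v m - x)) \<longlonglongrightarrow> 0"
  shows "(\<lambda>m. vnorm (F (v m) - F x)) \<longlonglongrightarrow> 0"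
  unfolding tendsto_iff
proof (intro allI impI)
  fix e :: real assume e: "e > 0"
  obtain d where d: "d > 0" "\<forall>y\<in>carrier_vec n. vnorm (y - x) < d \<longrightarrow> vnorm (F y - F x) < e"
    using F x e unfolding vcont_on_def by blast
  have "\<forall>\<^sub>F m in sequentially. vnorm (v m - x) < d" using order_tendstoD(2)[OF lim d(1)] .
  then show "\<forall>\<^sub>F m in sequentially. dist (vnorm (F (v m) - F x)) 0 < e"
    by eventually_elim (use d(2) v in \<open>simp add: vnorm_nonneg\<close>)
qed

lemma co_lipschitz_Cauchy:
  assumes F: "\<forall>x\<in>carrier_vec n. F x \<in> carrier_vec n"
    and low: "\<forall>x\<in>carrier_vec n. \<forall>y\<in>carrier_vec n. vnorm (x - y) \<le> C * vnorm (F x - F y)"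
    and y: "y \<in> carrier_vec n" and v: "\<And>m. v m \<in> carrier_vec n"
    and lim: "(\<lambda>m. vnorm (F (v m) - y)) \<longlonglongrightarrow> 0" and e: "e > 0"
  shows "\<exists>M. \<forall>m\<ge>M. \<forall>l\<ge>M. vnorm (v m - v l) < e"
proof -
  define K where "K = \<bar>C\<bar> + 1"
  have K: "K > 0" "C \<le> K" unfolding K_def by (simp_all add: add_nonneg_pos)
  define e' where "e' = e / (2 * K)"
  have "e' > 0" using e K by (simp add: e'_def)
  then obtain M where M: "\<forall>m\<ge>M. vnorm (F (v m) - y) < e'"
    using order_tendstoD(2)[OF lim] by (auto simp: eventually_sequentially)
  have "vnorm (v m - v l) < e" if "m \<ge> M" "l \<ge> M" for m l
  proof -
    have Fv: "F (v m) \<in> carrier_vec n" "F (v l) \<in> carrier_vec n" using F v by auto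
    have "vnorm (v m - v l) \<le> C * vnorm (F (v m) - F (v l))" using low v by blast
    also have "\<dots> \<le> K * vnorm (F (v m) - F (v l))"
      using K vnorm_nonneg by (intro mult_right_mono) auto
    also have "\<dots> \<le> K * (vnorm (F (v m) - y) + vnorm (F (v l) - y))"
      using vnorm_triangle_diff[of "F (v m)" y "F (v l)"] vnorm_minus_commute[of "F (v l)" y] Fv y K
      by (intro mult_left_mono) auto
    also have "\<dots> < K * (e' + e')"
      using M that K by (intro mult_strict_left_mono add_strict_mono) auto
    also have "\<dots> = e" using K by (simp add: e'_def field_simps)
    finally show ?thesis .
  qed
  then show ?thesis by blast
qed

text \<open>Preimages of ever better approximations of \<open>y\<close> form a Cauchy sequence, and continuity
  identifies the image of its limit with \<open>y\<close>.\<close>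

lemma co_lipschitz_attains_limit:
  assumes F: "\<forall>x\<in>carrier_vec n. F x \<in> carrier_vec n" and cont: "vcont_on n F"
    and low: "\<forall>x\<in>carrier_vec n. \<forall>y\<in>carrier_vec n. vnorm (x - y) \<le> C * vnorm (F x - F y)"
    and y: "y \<in> carrier_vec n" and approx: "\<forall>d>0. \<exists>v\<in>carrier_vec n. vnorm (F v - y) < d"
  shows "y \<in> F ` carrier_vec n"
proof -
  have "\<forall>m. \<exists>v\<in>carrier_vec n. vnorm (F v - y) < inverse (Suc m)"
    using approx by simp
  then obtain v where v: "\<And>m. v m \<in> carrier_vec n" "\<And>m. vnorm (F (v m) - y) < inverse (Suc m)"
    by metis
  have "\<forall>\<^sub>F m in sequentially. vnorm (F (v m) - y) \<le> inverse (Suc m)"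
    using v(2) less_imp_le by (intro always_eventually) blast
  then have approx_lim: "(\<lambda>m. vnorm (F (v m) - y)) \<longlonglongrightarrow> 0"
    by (intro tendsto_sandwich[OF _ _ tendsto_const LIMSEQ_inverse_real_of_nat]) (simp_all add: vnorm_nonneg)
  obtain x where x: "x \<in> carrier_vec n" "(\<lambda>m. vnorm (v m - x)) \<longlonglongrightarrow> 0"
    by (rule vec_Cauchy_convergent[OF v(1) co_lipschitz_Cauchy[OF F low y v(1) approx_lim]])
  have "(\<lambda>m. vnorm (F (v m) - F x) + vnorm (F (v m) - y)) \<longlonglongrightarrow> 0 + 0"
    by (intro tendsto_add vcont_on_imp_tendsto[OF cont x(1) v(1) x(2)] approx_lim)
  moreover have "vnorm (F x - y) \<le> vnorm (F (v m) - F x) + vnorm (F (v m) - y)" for m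
  proof -
    have "dim_vec (F x) = n" "dim_vec (F (v m)) = n" "dim_vec y = n" using F x(1) v(1) y by auto
    then show ?thesis
      using vnorm_triangle_diff[of "F x" "F (v m)" y] vnorm_minus_commute[of "F x" "F (v m)"] by simp
  qed
  ultimately have "vnorm (F x - y) \<le> 0" using LIMSEQ_le_const by fastforce
  then have "F x = y" using vnorm_diff_eq_0_iff[of "F x" n y] vnorm_nonneg[of "F x - y"] F x(1) y by simp
  then show ?thesis using x(1) by blast
qed

lemma co_lipschitz_imp_inj_on:
  assumes F: "\<forall>x\<in>carrier_vec n. F x \<in> carrier_vec n"
    and low: "\<forall>x\<in>carrier_vec n. \<forall>y\<in>carrier_vec n. vnorm (x - y) \<le> C * vnorm (F x - F y)"
  shows "inj_on F (carrier_vec n)"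
proof
  fix x y assume xy: "x \<in> carrier_vec n" "y \<in> carrier_vec n" "F x = F y"
  then have "vnorm (x - y) \<le> 0" using low[rule_format, OF xy(1,2)] F minus_cancel_vec[of "F y" n] by simp
  then have "vnorm (x - y) = 0" using vnorm_nonneg[of "x - y"] by linarith
  then show "x = y" using vnorm_diff_eq_0_iff[OF xy(1,2)] by simp
qed

definition fun_of_vec :: "nat \<Rightarrow> real vec \<Rightarrow> nat \<Rightarrow> real" where
  "fun_of_vec n v = (\<lambda>i. if i < n then v $ i else 0)"

lemma fun_of_vec_in_topspace: "fun_of_vec n v \<in> topspace (Euclidean_space n)"
  by (simp add: fun_of_vec_def topspace_Euclidean_space)

lemma vec_fun_of_vec: "v \<in> carrier_vec n \<Longrightarrow> vec n (fun_of_vec n v) = v"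
  by (auto simp: fun_of_vec_def)

lemma fun_of_vec_vec: "x \<in> topspace (Euclidean_space n) \<Longrightarrow> fun_of_vec n (vec n x) = x"
  by (auto simp: fun_of_vec_def topspace_Euclidean_space)

lemma open_coordinate_box: "open {z :: nat \<Rightarrow> real. \<forall>i<n. \<bar>z i - y i\<bar> < d}"
proof -
  have "{z :: nat \<Rightarrow> real. \<forall>i<n. \<bar>z i - y i\<bar> < d} = (\<Inter>i\<in>{..<n}. {z. \<bar>z i - y i\<bar> < d})"
    by auto
  also have "open \<dots>" by (intro open_INT) (auto intro!: open_Collect_less continuous_intros)
  finally show ?thesis .
qed

lemma vnorm_vec_diff_le_box:
  assumes "\<forall>i<n. \<bar>z i - y i\<bar> < d"
  shows "vnorm (vec n z - vec n y) \<le> real n * d"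
proof -
  have "vnorm (vec n z - vec n y) \<le> (\<Sum>i<n. \<bar>(vec n z - vec n y) $ i\<bar>)"
    using vnorm_le_sum_abs[of "vec n z - vec n y"] by simp
  also have "\<dots> \<le> (\<Sum>i<n. d)" by (rule sum_mono) (use assms in auto)
  finally show ?thesis by simp
qed

lemma continuous_on_comp_vec:
  fixes h :: "real vec \<Rightarrow> real"
  assumes "\<And>v e. v \<in> carrier_vec n \<Longrightarrow> e > 0 \<Longrightarrow>
     \<exists>d>0. \<forall>u\<in>carrier_vec n. vnorm (u - v) < d \<longrightarrow> \<bar>h u - h v\<bar> < e"
  shows "continuous_on UNIV (\<lambda>x :: nat \<Rightarrow> real. h (vec n x))"
  unfolding continuous_on_topological
proof (intro ballI allI impI)
  fix x :: "nat \<Rightarrow> real" and B assume B: "open B" "h (vec n x) \<in> B"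
  obtain e where e: "e > 0" "ball (h (vec n x)) e \<subseteq> B" using B open_contains_ball by blast
  obtain d where d: "d > 0" "\<forall>u\<in>carrier_vec n. vnorm (u - vec n x) < d \<longrightarrow> \<bar>h u - h (vec n x)\<bar> < e"
    using assms[of "vec n x" e] e(1) by auto
  define A where "A = {z :: nat \<Rightarrow> real. \<forall>i<n. \<bar>z i - x i\<bar> < d / (n + 1)}"
  have "h (vec n z) \<in> B" if "z \<in> A" for z
  proof -
    have "vnorm (vec n z - vec n x) \<le> real n * (d / (n + 1))"
      by (rule vnorm_vec_diff_le_box) (use that in \<open>simp add: A_def\<close>)
    also have "\<dots> < d" using d(1) by (simp add: field_simps)
    finally have "\<bar>h (vec n z) - h (vec n x)\<bar> < e" using d(2) by simp
    then show ?thesis using e(2) by (auto simp: dist_real_def abs_minus_commute)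
  qed
  moreover have "open A" "x \<in> A" unfolding A_def using d(1) by (auto intro: open_coordinate_box)
  ultimately show "\<exists>A. open A \<and> x \<in> A \<and> (\<forall>z\<in>UNIV. z \<in> A \<longrightarrow> h (vec n z) \<in> B)" by blast
qed

lemma continuous_map_Euclidean_space_of_vcont_on:
  assumes cont: "vcont_on n F" and F: "\<forall>v\<in>carrier_vec n. F v \<in> carrier_vec n"
  shows "continuous_map (Euclidean_space n) (Euclidean_space n) (\<lambda>x. fun_of_vec n (F (vec n x)))"
  unfolding fun_of_vec_def continuous_map_componentwise_Euclidean_space
proof (intro allI impI)
  fix i assume i: "i < n"
  have "continuous_on UNIV (\<lambda>x. F (vec n x) $ i)"
  proof (rule continuous_on_comp_vec)
    fix v :: "real vec" and e :: real assume "v \<in> carrier_vec n" "e > 0"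
    then obtain d where "d > 0" "\<forall>u\<in>carrier_vec n. vnorm (u - v) < d \<longrightarrow> vnorm (F u - F v) < e"
      using cont unfolding vcont_on_def by blast
    moreover have "\<bar>F u $ i - F v $ i\<bar> \<le> vnorm (F u - F v)" if "u \<in> carrier_vec n" for u
      using abs_index_le_vnorm[of i "F u - F v"] F that \<open>v \<in> carrier_vec n\<close> i by auto
    ultimately show "\<exists>d>0. \<forall>u\<in>carrier_vec n. vnorm (u - v) < d \<longrightarrow> \<bar>F u $ i - F v $ i\<bar> < e"
      by (meson le_less_trans)
  qed
  then show "continuous_map (Euclidean_space n) euclideanreal (\<lambda>x. F (vec n x) $ i)"
    unfolding continuous_map_Euclidean_space_iff by (rule continuous_on_subset) simp
qed

lemma closedin_Euclidean_space_co_lipschitz_image: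
  assumes F: "\<forall>x\<in>carrier_vec n. F x \<in> carrier_vec n" and cont: "vcont_on n F"
    and low: "\<forall>x\<in>carrier_vec n. \<forall>y\<in>carrier_vec n. vnorm (x - y) \<le> C * vnorm (F x - F y)"
  shows "closedin (Euclidean_space n) (fun_of_vec n ` F ` carrier_vec n)"
  unfolding closedin_Euclidean_space_iff
proof
  let ?S = "fun_of_vec n ` F ` carrier_vec n"
  show "?S \<subseteq> topspace (Euclidean_space n)" by (auto simp: fun_of_vec_in_topspace)
  show "closed ?S"
    unfolding closed_def
  proof (subst open_subopen, intro ballI)
    fix y assume y: "y \<in> - ?S"
    show "\<exists>T. open T \<and> y \<in> T \<and> T \<subseteq> - ?S"
    proof (cases "y \<in> topspace (Euclidean_space n)")
      case False
      have "closed (topspace (Euclidean_space n))"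
        by (rule closedin_Euclidean_imp_closed[of n]) simp
      then show ?thesis using False fun_of_vec_in_topspace
        by (intro exI[of _ "- topspace (Euclidean_space n)"]) (auto simp: closed_def)
    next
      case True
      then have "vec n y \<notin> F ` carrier_vec n" using y fun_of_vec_vec by force
      then obtain d where d: "d > 0" "\<forall>v\<in>carrier_vec n. \<not> vnorm (F v - vec n y) < d"
        using co_lipschitz_attains_limit[OF F cont low, of "vec n y"] by auto
      define T where "T = {z :: nat \<Rightarrow> real. \<forall>i<n. \<bar>z i - y i\<bar> < d / (n + 1)}"
      have "fun_of_vec n (F v) \<notin> T" if "v \<in> carrier_vec n" for v
      proof
        assume "fun_of_vec n (F v) \<in> T"
        then have "vnorm (vec n (fun_of_vec n (F v)) - vec n y) \<le> real n * (d / (n + 1))"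
          by (intro vnorm_vec_diff_le_box) (simp add: T_def)
        also have "\<dots> < d" using d(1) by (simp add: field_simps)
        finally show False using d(2) that F vec_fun_of_vec by metis
      qed
      moreover have "open T" "y \<in> T" unfolding T_def using d(1) by (auto intro: open_coordinate_box)
      ultimately show ?thesis by blast
    qed
  qed
qed

text \<open>Invariance of domain makes the image open, completeness makes it closed, and
  connectedness of the space does the rest.\<close>

lemma co_lipschitz_vcont_on_surj:
  assumes F: "\<forall>x\<in>carrier_vec n. F x \<in> carrier_vec n" and cont: "vcont_on n F"
    and low: "\<forall>x\<in>carrier_vec n. \<forall>y\<in>carrier_vec n. vnorm (x - y) \<le> C * vnorm (F x - F y)"
  shows "F ` carrier_vec n = carrier_vec n"
proof -
  let ?E = "topspace (Euclidean_space n)"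
  let ?G = "\<lambda>x. fun_of_vec n (F (vec n x))"
  have "vec n ` ?E = carrier_vec n"
  proof
    show "carrier_vec n \<subseteq> vec n ` ?E"
      using vec_fun_of_vec fun_of_vec_in_topspace by (metis image_eqI subsetI)
  qed auto
  then have img: "?G ` ?E = fun_of_vec n ` F ` carrier_vec n" by (metis image_image)
  have "inj_on ?G ?E"
  proof
    fix x y assume xy: "x \<in> ?E" "y \<in> ?E" "?G x = ?G y"
    have "F (vec n x) \<in> carrier_vec n" "F (vec n y) \<in> carrier_vec n" using F by auto
    then have "F (vec n x) = F (vec n y)" using arg_cong[OF xy(3), of "vec n"] by (simp add: vec_fun_of_vec)
    then have "vec n x = vec n y"
      using co_lipschitz_imp_inj_on[OF F low] by (simp add: inj_on_def)
    then show "x = y" by (metis fun_of_vec_vec xy(1,2))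
  qed
  then have "openin (Euclidean_space n) (?G ` ?E)"
    using continuous_map_Euclidean_space_of_vcont_on[OF cont F]
    by (intro invariance_of_domain_Euclidean_space) auto
  moreover have "closedin (Euclidean_space n) (?G ` ?E)"
    unfolding img by (rule closedin_Euclidean_space_co_lipschitz_image[OF F cont low])
  moreover have "?G ` ?E \<noteq> {}" using fun_of_vec_in_topspace by blast
  ultimately have GE: "?G ` ?E = ?E"
    using connected_Euclidean_space[of n] unfolding connected_space_clopen_in by blast
  show ?thesis
  proof
    show "F ` carrier_vec n \<subseteq> carrier_vec n" using F by blast
    show "carrier_vec n \<subseteq> F ` carrier_vec n"
    proof
      fix v :: "real vec" assume v: "v \<in> carrier_vec n"
      then have "fun_of_vec n v \<in> fun_of_vec n ` F ` carrier_vec n"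
        using GE img fun_of_vec_in_topspace by simp
      then obtain u where u: "u \<in> carrier_vec n" "fun_of_vec n v = fun_of_vec n (F u)" by blast
      then have "vec n (fun_of_vec n v) = vec n (fun_of_vec n (F u))" by simp
      then have "v = F u" using v u(1) F by (simp add: vec_fun_of_vec)
      then show "v \<in> F ` carrier_vec n" using u(1) by blast
    qed
  qed
qed

lemma bilipschitz_imp_vhomeo:
  assumes F: "\<forall>x\<in>carrier_vec n. F x \<in> carrier_vec n"
    and up: "\<forall>x\<in>carrier_vec n. \<forall>y\<in>carrier_vec n. vnorm (F x - F y) \<le> L * vnorm (x - y)"
    and low: "\<forall>x\<in>carrier_vec n. \<forall>y\<in>carrier_vec n. vnorm (x - y) \<le> C * vnorm (F x - F y)"
  shows "vhomeo n F"
proof -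
  let ?C = "carrier_vec n :: real vec set"
  let ?F' = "the_inv_into ?C F"
  have cont: "vcont_on n F" using up by (rule lipschitz_imp_vcont_on)
  have bij: "bij_betw F ?C ?C"
    using co_lipschitz_imp_inj_on[OF F low] co_lipschitz_vcont_on_surj[OF F cont low]
    by (simp add: bij_betw_def)
  have "vnorm (?F' y - ?F' y') \<le> C * vnorm (y - y')" if "y \<in> ?C" "y' \<in> ?C" for y y'
  proof -
    have "?F' y \<in> ?C" "?F' y' \<in> ?C"
      using that bij_betw_apply[OF bij_betw_the_inv_into[OF bij]] by auto
    moreover have "F (?F' y) = y" "F (?F' y') = y'"
      using that f_the_inv_into_f_bij_betw[OF bij] by auto
    ultimately show ?thesis using low[rule_format, of "?F' y" "?F' y'"] by simp
  qed
  then have "vcont_on n ?F'" using lipschitz_imp_vcont_on[of n ?F' C] by blast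
  with bij cont show ?thesis by (simp add: vhomeo_def)
qed

lemma vhomeo_compose:
  assumes f: "vhomeo p f" and g: "vhomeo p g"
  shows "vhomeo p (\<lambda>z. g (f z))"
proof -
  let ?C = "carrier_vec p :: real vec set"
  have bf: "bij_betw f ?C ?C" and bg: "bij_betw g ?C ?C" using f g by (auto simp: vhomeo_def)
  have bij: "bij_betw (\<lambda>z. g (f z)) ?C ?C" using bij_betw_trans[OF bf bg] by (simp add: comp_def)
  have fC: "\<forall>z\<in>?C. f z \<in> ?C" and giC: "\<forall>z\<in>?C. the_inv_into ?C g z \<in> ?C"
    using bij_betw_apply[OF bf] bij_betw_apply[OF bij_betw_the_inv_into[OF bg]] by blast+
  have inv: "the_inv_into ?C (\<lambda>z. g (f z)) y = the_inv_into ?C f (the_inv_into ?C g y)"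
    if y: "y \<in> ?C" for y
  proof (rule the_inv_into_f_eq[OF bij_betw_imp_inj_on[OF bij]])
    show "the_inv_into ?C f (the_inv_into ?C g y) \<in> ?C"
      using giC y bij_betw_apply[OF bij_betw_the_inv_into[OF bf]] by blast
    show "g (f (the_inv_into ?C f (the_inv_into ?C g y))) = y"
      using giC y f_the_inv_into_f_bij_betw[OF bf] f_the_inv_into_f_bij_betw[OF bg] by simp
  qed
  have "vcont_on p (\<lambda>y. the_inv_into ?C f (the_inv_into ?C g y))"
    by (rule vcont_on_compose[of p "the_inv_into ?C g"]) (use f g giC in \<open>auto simp: vhomeo_def\<close>)
  then have "vcont_on p (the_inv_into ?C (\<lambda>z. g (f z)))" using inv by (rule vcont_on_cong)
  moreover have "vcont_on p (\<lambda>z. g (f z))"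
    by (rule vcont_on_compose[of p f]) (use f g fC in \<open>auto simp: vhomeo_def\<close>)
  ultimately show ?thesis using bij by (simp add: vhomeo_def)
qed

lemma vhomeo_cong:
  assumes g: "vhomeo p g" and eq: "\<And>z. z \<in> carrier_vec p \<Longrightarrow> h z = g z"
  shows "vhomeo p h"
proof -
  let ?C = "carrier_vec p :: real vec set"
  have bg: "bij_betw g ?C ?C" using g by (simp add: vhomeo_def)
  then have bij: "bij_betw h ?C ?C" using eq bij_betw_cong[of ?C h g ?C] by simp
  have inv: "the_inv_into ?C h y = the_inv_into ?C g y" if y: "y \<in> ?C" for y
  proof (rule the_inv_into_f_eq[OF bij_betw_imp_inj_on[OF bij]])
    show "the_inv_into ?C g y \<in> ?C" using y bij_betw_apply[OF bij_betw_the_inv_into[OF bg]] by blast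
    then show "h (the_inv_into ?C g y) = y" using y eq f_the_inv_into_f_bij_betw[OF bg] by simp
  qed
  have "vcont_on p h" by (rule vcont_on_cong[of p g]) (use g eq in \<open>auto simp: vhomeo_def\<close>)
  moreover have "vcont_on p (the_inv_into ?C h)"
    by (rule vcont_on_cong[of p "the_inv_into ?C g"]) (use g inv in \<open>auto simp: vhomeo_def\<close>)
  ultimately show ?thesis using bij by (simp add: vhomeo_def)
qed

lemma abs_det_le:
  fixes A :: "real mat"
  assumes A: "A \<in> carrier_mat n n" and L: "\<forall>i<n. \<forall>j<n. \<bar>A $$ (i,j)\<bar> \<le> L"
  shows "\<bar>det A\<bar> \<le> fact n * L ^ n"
proof -
  let ?P = "{p. p permutes {0..<n}}"
  have "\<bar>det A\<bar> \<le> (\<Sum>p\<in>?P. \<bar>signof p * (\<Prod>i = 0..<n. A $$ (i, p i))\<bar>)"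
    unfolding det_def'[OF A] by (rule sum_abs)
  also have "\<dots> \<le> (\<Sum>p\<in>?P. L ^ n)"
  proof (rule sum_mono)
    fix p assume p: "p \<in> ?P"
    have "\<bar>signof p * (\<Prod>i = 0..<n. A $$ (i, p i))\<bar> = (\<Prod>i = 0..<n. \<bar>A $$ (i, p i)\<bar>)"
      by (simp add: abs_mult abs_prod sign_def)
    also have "\<dots> \<le> (\<Prod>i = 0..<n. L)"
      using L p by (intro prod_mono) (auto dest: permutes_in_image)
    finally show "\<bar>signof p * (\<Prod>i = 0..<n. A $$ (i, p i))\<bar> \<le> L ^ n" by simp
  qed
  also have "\<dots> = fact n * L ^ n" using card_permutations[of "{0..<n}" n] by simp
  finally show ?thesis .
qed

lemma mat_abs_sum_adj_mat_le:
  fixes A :: "real mat"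
  assumes A: "A \<in> carrier_mat n n" and L: "\<forall>i<n. \<forall>j<n. \<bar>A $$ (i,j)\<bar> \<le> L"
  shows "mat_abs_sum (adj_mat A) \<le> real (n * n) * (fact (n - 1) * L ^ (n - 1))"
proof -
  have entry: "\<bar>adj_mat A $$ (i,j)\<bar> \<le> fact (n - 1) * L ^ (n - 1)" if "i < n" "j < n" for i j
  proof -
    have "\<bar>adj_mat A $$ (i,j)\<bar> = \<bar>det (mat_delete A j i)\<bar>"
      using A that by (simp add: adj_mat_def cofactor_def abs_mult)
    also have "\<dots> \<le> fact (n - 1) * L ^ (n - 1)"
      by (rule abs_det_le) (use A L in \<open>auto simp: mat_delete_def\<close>)
    finally show ?thesis .
  qed
  have "mat_abs_sum (adj_mat A) = (\<Sum>i<n. \<Sum>j<n. \<bar>adj_mat A $$ (i,j)\<bar>)"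
    using A by (simp add: mat_abs_sum_def adj_mat_def)
  also have "\<dots> \<le> (\<Sum>i<n. \<Sum>j<n. fact (n - 1) * L ^ (n - 1))"
    by (intro sum_mono entry) auto
  finally show ?thesis by simp
qed

lemma abs_det_mult_vnorm_le:
  assumes A: "A \<in> carrier_mat n n" and s: "s \<in> carrier_vec n"
  shows "\<bar>det A\<bar> * vnorm s \<le> mat_abs_sum (adj_mat A) * vnorm (A *\<^sub>v s)"
proof -
  have "adj_mat A *\<^sub>v (A *\<^sub>v s) = (adj_mat A * A) *\<^sub>v s"
    using adj_mat(1)[OF A] A s by simp
  also have "\<dots> = (det A \<cdot>\<^sub>m 1\<^sub>m n) *\<^sub>v s" using adj_mat(3)[OF A] by simp
  also have "\<dots> = det A \<cdot>\<^sub>v s" using s by (simp add: smult_mat_mult_vec)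
  finally have "\<bar>det A\<bar> * vnorm s = vnorm (adj_mat A *\<^sub>v (A *\<^sub>v s))" by (simp add: vnorm_smult)
  also have "\<dots> \<le> mat_abs_sum (adj_mat A) * vnorm (A *\<^sub>v s)"
    by (rule vnorm_mult_mat_vec_le) (use A adj_mat(1)[OF A] in auto)
  finally show ?thesis .
qed

lemma norm_prod_one_minus_ge:
  assumes "\<forall>a\<in>set as. norm (a :: complex) \<le> \<rho>" "\<rho> < 1"
  shows "(1 - \<rho>) ^ length as \<le> norm (\<Prod>a\<leftarrow>as. 1 - a)"
  using assms
proof (induction as)
  case (Cons a as)
  have "1 - \<rho> \<le> norm (1 - a)" using Cons.prems norm_triangle_ineq2[of 1 a] by auto
  then show ?case using Cons by (auto simp: norm_mult intro!: mult_mono)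
qed simp

text \<open>The eigenvalues of \<open>1 + A\<close> lie in the disc of radius \<open>\<rho>\<close>, so those of \<open>A\<close> keep
  distance at least \<open>1 - \<rho>\<close> from the origin.\<close>

lemma abs_det_ge_of_sprad:
  fixes A :: "real mat"
  assumes A: "A \<in> carrier_mat n n" and sp: "sprad (1\<^sub>m n + A) \<le> \<rho>" and \<rho>: "\<rho> < 1"
  shows "(1 - \<rho>) ^ n \<le> \<bar>det A\<bar>"
proof (cases "n = 0")
  case True
  then show ?thesis using A by (simp add: det_def)
next
  case False
  define B where "B = map_mat complex_of_real (1\<^sub>m n + A)"
  have B: "B \<in> carrier_mat n n" unfolding B_def using A by simp
  obtain as where as: "char_poly B = (\<Prod>a\<leftarrow>as. [:- a, 1:])" "length as = n"
    using char_poly_factorized[OF B] by blast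
  have "norm a \<le> \<rho>" if "a \<in> set as" for a
  proof -
    have "eigenvalue B a"
      using that eigenvalue_root_char_poly[OF B] by (simp add: as(1) poly_prod_list prod_list_zero_iff)
    then have "norm a \<le> spectral_radius B"
      using spectral_radius_mem_max(2)[OF B] False by (simp add: spectrum_def)
    then show ?thesis using sp False A unfolding sprad_def B_def by simp
  qed
  then have "(1 - \<rho>) ^ n \<le> norm (\<Prod>a\<leftarrow>as. 1 - a)"
    using norm_prod_one_minus_ge[of as \<rho>] \<rho> as(2) by simp
  also have "(\<Prod>a\<leftarrow>as. 1 - a) = poly (char_poly B) 1"
    unfolding as(1) by (induction as) (auto simp: algebra_simps)
  also have "\<dots> = det (- char_matrix B 1)" by (rule char_poly_matrix[OF B])
  also have "- char_matrix B 1 = (-1) \<cdot>\<^sub>m map_mat complex_of_real A"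
    by (rule eq_matI) (use A B in \<open>auto simp: char_matrix_def B_def\<close>)
  also have "norm (det \<dots>) = \<bar>det A\<bar>"
    using A by (simp add: det_smult of_real_hom.hom_det norm_mult norm_power)
  finally show ?thesis .
qed

lemma uniform_lower_bound_of_sprad:
  assumes L: "0 \<le> L" and \<rho>: "\<rho> < 1"
  obtains c :: real where "c > 0"
    "\<And>A s. (A :: real mat) \<in> carrier_mat N N \<Longrightarrow> \<forall>i<N. \<forall>j<N. \<bar>A $$ (i,j)\<bar> \<le> L \<Longrightarrow>
       sprad (1\<^sub>m N + A) \<le> \<rho> \<Longrightarrow> s \<in> carrier_vec N \<Longrightarrow> c * vnorm s \<le> vnorm (A *\<^sub>v s)"
proof
  define D where "D = (1 - \<rho>) ^ N"
  define M where "M = real (N * N) * (fact (N - 1) * L ^ (N - 1))"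
  have D: "D > 0" and M: "M \<ge> 0" unfolding D_def M_def using \<rho> L by simp_all
  show "D / (M + 1) > 0" using D M by simp
  fix A :: "real mat" and s :: "real vec"
  assume A: "A \<in> carrier_mat N N" and AL: "\<forall>i<N. \<forall>j<N. \<bar>A $$ (i,j)\<bar> \<le> L"
    and sp: "sprad (1\<^sub>m N + A) \<le> \<rho>" and s: "s \<in> carrier_vec N"
  have "D * vnorm s \<le> \<bar>det A\<bar> * vnorm s"
    unfolding D_def by (rule mult_right_mono[OF abs_det_ge_of_sprad[OF A sp \<rho>] vnorm_nonneg])
  also have "\<dots> \<le> mat_abs_sum (adj_mat A) * vnorm (A *\<^sub>v s)" by (rule abs_det_mult_vnorm_le[OF A s])
  also have "\<dots> \<le> M * vnorm (A *\<^sub>v s)"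
    unfolding M_def by (rule mult_right_mono[OF mat_abs_sum_adj_mat_le[OF A AL] vnorm_nonneg])
  also have "\<dots> \<le> (M + 1) * vnorm (A *\<^sub>v s)" by (intro mult_right_mono) (simp_all add: vnorm_nonneg)
  finally show "D / (M + 1) * vnorm s \<le> vnorm (A *\<^sub>v s)"
    using M by (simp add: field_simps)
qed

lemma abs_transpose_mult_entry_le:
  fixes \<beta> B :: "real mat"
  assumes \<beta>: "\<beta> \<in> carrier_mat K N" and B: "B \<in> carrier_mat K N" and ij: "i < N" "j < N"
  shows "\<bar>(transpose_mat \<beta> * B) $$ (i,j)\<bar> \<le> mnorm \<beta> * mat_abs_sum B"
proof -
  have entry: "C $$ (i,j) = (C *\<^sub>v unit_vec N j) $ i" if "C \<in> carrier_mat N N" for C :: "real mat"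
    using that ij by simp
  have "(transpose_mat \<beta> * B) $$ (i,j) = ((transpose_mat \<beta> * B) *\<^sub>v unit_vec N j) $ i"
    using \<beta> B by (intro entry) simp
  also have "\<dots> = (transpose_mat \<beta> *\<^sub>v (B *\<^sub>v unit_vec N j)) $ i"
    using \<beta> B by simp
  finally have "\<bar>(transpose_mat \<beta> * B) $$ (i,j)\<bar> = \<bar>(transpose_mat \<beta> *\<^sub>v (B *\<^sub>v unit_vec N j)) $ i\<bar>"
    by simp
  also have "\<dots> \<le> vnorm (transpose_mat \<beta> *\<^sub>v (B *\<^sub>v unit_vec N j))"
    by (rule abs_index_le_vnorm) (use \<beta> ij in simp)
  also have "\<dots> \<le> mnorm \<beta> * vnorm (B *\<^sub>v unit_vec N j)"
    by (rule vnorm_transpose_mult_le_mnorm[OF \<beta>]) (use B in simp)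
  also have "\<dots> \<le> mnorm \<beta> * (mat_abs_sum B * vnorm (unit_vec N j :: real vec))"
    by (intro mult_left_mono vnorm_mult_mat_vec_le mnorm_nonneg[OF \<beta>]) (use B in simp)
  also have "vnorm (unit_vec N j :: real vec) = 1" using ij by (simp add: vnorm_def)
  finally show ?thesis by simp
qed

lemma sprad_nonneg:
  assumes "A \<in> carrier_mat N N"
  shows "0 \<le> sprad A"
proof (cases "N = 0")
  case False
  then show ?thesis
    using spectral_radius_mem_max(1)[of "map_mat complex_of_real A" N] assms by (auto simp: sprad_def)
qed (use assms in \<open>simp add: sprad_def\<close>)

lemma foldr_replicate_eigenvector:
  fixes M :: "real mat"
  assumes M: "M \<in> carrier_mat N N" and v: "eigenvector (map_mat complex_of_real M) v lam"
  shows "map_mat complex_of_real (foldr (*) (replicate s M) (1\<^sub>m N)) *\<^sub>v v = lam ^ s \<cdot>\<^sub>v v"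
proof (induction s)
  let ?MC = "map_mat complex_of_real M"
  have vc: "v \<in> carrier_vec N" and Mv: "?MC *\<^sub>v v = lam \<cdot>\<^sub>v v"
    using M v unfolding eigenvector_def by auto
  {
    case 0
    show ?case using vc by (simp add: of_real_hom.mat_hom_one)
  next
    case (Suc s)
    have P: "foldr (*) (replicate s M) (1\<^sub>m N) \<in> carrier_mat N N"
      by (induction s) (use M in auto)
    have "map_mat complex_of_real (foldr (*) (replicate (Suc s) M) (1\<^sub>m N)) *\<^sub>v v
        = ?MC *\<^sub>v (map_mat complex_of_real (foldr (*) (replicate s M) (1\<^sub>m N)) *\<^sub>v v)"
      using M P vc by (simp add: of_real_hom.mat_hom_mult)
    also have "\<dots> = ?MC *\<^sub>v (lam ^ s \<cdot>\<^sub>v v)" by (simp only: Suc)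
    also have "\<dots> = lam ^ Suc s \<cdot>\<^sub>v v"
      using M vc by (simp add: mult_mat_vec Mv smult_smult_assoc mult.commute)
    finally show ?case .
  }
qed

lemma sprad_power_le:
  fixes M :: "real mat"
  assumes M: "M \<in> carrier_mat N N" and t: "t > 0"
  shows "sprad M ^ t \<le> sprad (foldr (*) (replicate t M) (1\<^sub>m N))"
proof -
  let ?P = "foldr (*) (replicate t M) (1\<^sub>m N)"
  let ?MC = "map_mat complex_of_real M"
  have P: "?P \<in> carrier_mat N N" by (induction t) (use M in auto)
  show ?thesis
  proof (cases "N = 0")
    case True
    then show ?thesis using M t P by (simp add: sprad_def power_0_left)
  next
    case False
    have MC: "?MC \<in> carrier_mat N N" using M by simp
    obtain lam where lam: "lam \<in> spectrum ?MC" "norm lam = spectral_radius ?MC"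
      using spectral_radius_mem_max(1)[OF MC] False by auto
    then obtain v where v: "eigenvector ?MC v lam" unfolding spectrum_def eigenvalue_def by auto
    then have "eigenvector (map_mat complex_of_real ?P) v (lam ^ t)"
      using foldr_replicate_eigenvector[OF M v, of t] MC P unfolding eigenvector_def by auto
    then have "lam ^ t \<in> spectrum (map_mat complex_of_real ?P)"
      unfolding spectrum_def eigenvalue_def by blast
    then have "norm (lam ^ t) \<le> spectral_radius (map_mat complex_of_real ?P)"
      using P False by (intro spectral_radius_mem_max(2)[of _ N]) auto
    then show ?thesis using lam(2) M P False by (simp add: sprad_def norm_power)
  qed
qed

lemma sprad_le_jsr:
  fixes M :: "real mat"
  assumes \<A>: "\<A> \<subseteq> carrier_mat N N" and M: "M \<in> \<A>"
  shows "ereal (sprad M) \<le> jsr N \<A>"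
  unfolding jsr_def
proof (rule le_Limsup[OF trivial_limit_sequentially], unfold eventually_sequentially, intro exI allI impI)
  fix t :: nat assume t: "1 \<le> t"
  have MN: "M \<in> carrier_mat N N" using \<A> M by auto
  have "sprad M = root t (sprad M ^ t)"
    using t sprad_nonneg[OF MN] by (simp add: real_root_power_cancel)
  also have "\<dots> \<le> root t (sprad (foldr (*) (replicate t M) (1\<^sub>m N)))"
    using sprad_power_le[OF MN] t by simp
  finally have "ereal (sprad M) \<le> ereal (root t (sprad (foldr (*) (replicate t M) (1\<^sub>m N))))" by simp
  also have "\<dots> \<le> Sup ((\<lambda>Ms. ereal (root t (sprad (foldr (*) Ms (1\<^sub>m N)))))
      ` {Ms. length Ms = t \<and> set Ms \<subseteq> \<A>})"
    using M by (intro Sup_upper image_eqI[of _ _ "replicate t M"]) auto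
  finally show "ereal (sprad M) \<le> Sup ((\<lambda>Ms. ereal (root t (sprad (foldr (*) Ms (1\<^sub>m N)))))
      ` {Ms. length Ms = t \<and> set Ms \<subseteq> \<A>})" .
qed

lemma full_rank_imp_inj:
  fixes A :: "real mat"
  assumes A: "A \<in> carrier_mat n m" and rk: "vec_space.rank n A = m"
    and x: "x \<in> carrier_vec m" and Ax: "A *\<^sub>v x = 0\<^sub>v n"
  shows "x = 0\<^sub>v m"
proof (rule ccontr)
  assume x0: "x \<noteq> 0\<^sub>v m"
  interpret vs: vec_space "TYPE(real)" n .
  show False
  proof (cases "distinct (cols A)")
    case True
    from vs.full_rank_lin_indpt[OF A rk True] vs.lin_depI[OF A x x0 Ax True] show False by simp
  next
    case False
    obtain S where S: "maximal S (\<lambda>T. T \<subseteq> set (cols A) \<and> vs.lin_indpt T)"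
      using maximal_exists[of "\<lambda>T. T \<subseteq> set (cols A) \<and> vs.lin_indpt T" "card (set (cols A))" "{}"]
      by (meson List.finite_set card_mono empty_iff empty_subsetI vs.finite_lin_indpt2 rev_finite_subset)
    then have "card S \<le> card (set (cols A))" by (simp add: card_mono maximal_def)
    also have "\<dots> < length (cols A)"
      using False card_distinct card_length le_neq_implies_less by blast
    finally show False using vs.rank_card_indpt[OF A S] rk A by simp
  qed
qed

lemma square_mat_inverse_of_inj:
  fixes A :: "real mat"
  assumes A: "A \<in> carrier_mat n n" and inj: "\<forall>x\<in>carrier_vec n. A *\<^sub>v x = 0\<^sub>v n \<longrightarrow> x = 0\<^sub>v n"
  obtains B where "B \<in> carrier_mat n n" "A * B = 1\<^sub>m n" "B * A = 1\<^sub>m n"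
proof -
  have "det A \<noteq> 0" using det_0_iff_vec_prod_zero_field[OF A] inj by auto
  then have "A \<in> Units (ring_mat TYPE(real) n n)" by (rule det_non_zero_imp_unit[OF A])
  then show thesis using that by (auto simp: Units_def ring_mat_def)
qed

lemma mult_mat_vec_eq_0_of_gram:
  fixes A :: "real mat"
  assumes A: "A \<in> carrier_mat m n" and x: "x \<in> carrier_vec n"
    and h: "transpose_mat A *\<^sub>v (A *\<^sub>v x) = 0\<^sub>v n"
  shows "A *\<^sub>v x = 0\<^sub>v m"
proof -
  have "(A *\<^sub>v x) \<bullet> (A *\<^sub>v x) = (transpose_mat A *\<^sub>v (A *\<^sub>v x)) \<bullet> x"
    by (rule transpose_vec_mult_scalar[OF A x, symmetric]) (use A x in simp)
  then have "vnorm (A *\<^sub>v x) = 0" using h x by (simp add: vnorm_def)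
  then show ?thesis using A by (simp add: vnorm_eq_0_iff)
qed

lemma gram_left_inverse:
  fixes A :: "real mat"
  assumes A: "A \<in> carrier_mat m n" and inj: "\<forall>x\<in>carrier_vec n. A *\<^sub>v x = 0\<^sub>v m \<longrightarrow> x = 0\<^sub>v n"
  obtains G where "G \<in> carrier_mat n n"
    "\<And>x. x \<in> carrier_vec n \<Longrightarrow> G *\<^sub>v (transpose_mat A *\<^sub>v (A *\<^sub>v x)) = x"
proof -
  have AA: "transpose_mat A * A \<in> carrier_mat n n" using A by simp
  have "\<forall>x\<in>carrier_vec n. (transpose_mat A * A) *\<^sub>v x = 0\<^sub>v n \<longrightarrow> x = 0\<^sub>v n"
  proof (intro ballI impI)
    fix x :: "real vec" assume x: "x \<in> carrier_vec n" and "(transpose_mat A * A) *\<^sub>v x = 0\<^sub>v n"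
    then have "transpose_mat A *\<^sub>v (A *\<^sub>v x) = 0\<^sub>v n" using A by simp
    then show "x = 0\<^sub>v n" using inj x mult_mat_vec_eq_0_of_gram[OF A x] by blast
  qed
  then obtain G where G: "G \<in> carrier_mat n n" "G * (transpose_mat A * A) = 1\<^sub>m n"
    by (rule square_mat_inverse_of_inj[OF AA])
  have "G *\<^sub>v (transpose_mat A *\<^sub>v (A *\<^sub>v x)) = x" if "x \<in> carrier_vec n" for x
  proof -
    have "x = (G * (transpose_mat A * A)) *\<^sub>v x" using G(2) that by simp
    also have "\<dots> = G *\<^sub>v ((transpose_mat A * A) *\<^sub>v x)" by (rule assoc_mult_mat_vec[OF G(1) AA that])
    also have "(transpose_mat A * A) *\<^sub>v x = transpose_mat A *\<^sub>v (A *\<^sub>v x)"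
      by (rule assoc_mult_mat_vec) (use A that in auto)
    finally show ?thesis by simp
  qed
  with G(1) show thesis by (rule that)
qed

lemma transpose_mult_orthogonal_sum:
  fixes \<alpha> \<alpha>perp :: "real mat"
  assumes a: "\<alpha> \<in> carrier_mat p r" and ap: "\<alpha>perp \<in> carrier_mat p q"
    and orth: "transpose_mat \<alpha>perp * \<alpha> = 0\<^sub>m q r"
    and x: "x \<in> carrier_vec q" and y: "y \<in> carrier_vec r"
  shows "transpose_mat \<alpha>perp *\<^sub>v (\<alpha>perp *\<^sub>v x + \<alpha> *\<^sub>v y) = transpose_mat \<alpha>perp *\<^sub>v (\<alpha>perp *\<^sub>v x)"
proof -
  have "transpose_mat \<alpha>perp *\<^sub>v (\<alpha> *\<^sub>v y) = (transpose_mat \<alpha>perp * \<alpha>) *\<^sub>v y"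
    by (rule assoc_mult_mat_vec[symmetric]) (use ap a y in auto)
  then have "transpose_mat \<alpha>perp *\<^sub>v (\<alpha> *\<^sub>v y) = 0\<^sub>v q" using y by (simp add: orth)
  moreover have "transpose_mat \<alpha>perp *\<^sub>v (\<alpha>perp *\<^sub>v x + \<alpha> *\<^sub>v y)
      = transpose_mat \<alpha>perp *\<^sub>v (\<alpha>perp *\<^sub>v x) + transpose_mat \<alpha>perp *\<^sub>v (\<alpha> *\<^sub>v y)"
    by (rule mult_add_distrib_mat_vec[of _ q p]) (use ap a x y in auto)
  ultimately show ?thesis using ap x by simp
qed

lemma orthogonal_blocks_independent:
  fixes \<alpha> \<alpha>perp :: "real mat"
  assumes a: "\<alpha> \<in> carrier_mat p r" and ap: "\<alpha>perp \<in> carrier_mat p q"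
    and ainj: "\<forall>y\<in>carrier_vec r. \<alpha> *\<^sub>v y = 0\<^sub>v p \<longrightarrow> y = 0\<^sub>v r"
    and apinj: "\<forall>x\<in>carrier_vec q. \<alpha>perp *\<^sub>v x = 0\<^sub>v p \<longrightarrow> x = 0\<^sub>v q"
    and orth: "transpose_mat \<alpha>perp * \<alpha> = 0\<^sub>m q r"
    and x: "x \<in> carrier_vec q" and y: "y \<in> carrier_vec r"
    and sum0: "\<alpha>perp *\<^sub>v x + \<alpha> *\<^sub>v y = 0\<^sub>v p"
  shows "x = 0\<^sub>v q \<and> y = 0\<^sub>v r"
proof -
  have "transpose_mat \<alpha>perp *\<^sub>v (\<alpha>perp *\<^sub>v x) = 0\<^sub>v q"
    using transpose_mult_orthogonal_sum[OF a ap orth x y] sum0 ap by simp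
  then have "\<alpha>perp *\<^sub>v x = 0\<^sub>v p" by (rule mult_mat_vec_eq_0_of_gram[OF ap x])
  then have "\<alpha> *\<^sub>v y = 0\<^sub>v p" using sum0 a y by simp
  then show ?thesis using \<open>\<alpha>perp *\<^sub>v x = 0\<^sub>v p\<close> ainj apinj x y by blast
qed

lemma orthogonal_blocks_decomposition:
  fixes \<alpha> \<alpha>perp :: "real mat"
  assumes a: "\<alpha> \<in> carrier_mat p r" and ap: "\<alpha>perp \<in> carrier_mat p (p - r)" and rp: "r \<le> p"
    and ainj: "\<forall>y\<in>carrier_vec r. \<alpha> *\<^sub>v y = 0\<^sub>v p \<longrightarrow> y = 0\<^sub>v r"
    and apinj: "\<forall>x\<in>carrier_vec (p - r). \<alpha>perp *\<^sub>v x = 0\<^sub>v p \<longrightarrow> x = 0\<^sub>v (p - r)"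
    and orth: "transpose_mat \<alpha>perp * \<alpha> = 0\<^sub>m (p - r) r"
    and u: "u \<in> carrier_vec p"
  obtains x y where "x \<in> carrier_vec (p - r)" "y \<in> carrier_vec r" "u = \<alpha>perp *\<^sub>v x + \<alpha> *\<^sub>v y"
proof -
  define Q where "Q = four_block_mat \<alpha>perp \<alpha> (0\<^sub>m 0 (p - r)) (0\<^sub>m 0 r)"
  have "Q \<in> carrier_mat (p + 0) ((p - r) + r)"
    unfolding Q_def by (rule four_block_carrier_mat[OF ap]) simp
  then have Q: "Q \<in> carrier_mat p p" using rp by simp
  have split: "w = vec_first w (p - r) @\<^sub>v vec_last w r" if "w \<in> carrier_vec p" for w :: "real vec"
    using that rp by (intro vec_first_last_append[symmetric]) simp
  have Qw: "Q *\<^sub>v w = \<alpha>perp *\<^sub>v vec_first w (p - r) + \<alpha> *\<^sub>v vec_last w r" if "w \<in> carrier_vec p" for w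
  proof -
    have "Q *\<^sub>v w = (\<alpha>perp *\<^sub>v vec_first w (p - r) + \<alpha> *\<^sub>v vec_last w r) @\<^sub>v
        (0\<^sub>m 0 (p - r) *\<^sub>v vec_first w (p - r) + 0\<^sub>m 0 r *\<^sub>v vec_last w r)"
      unfolding Q_def by (subst split[OF that], rule four_block_mat_mult_vec[OF ap a]) auto
    also have "\<dots> = \<alpha>perp *\<^sub>v vec_first w (p - r) + \<alpha> *\<^sub>v vec_last w r"
      using ap a by (intro eq_vecI) auto
    finally show ?thesis .
  qed
  have "\<forall>w\<in>carrier_vec p. Q *\<^sub>v w = 0\<^sub>v p \<longrightarrow> w = 0\<^sub>v p"
  proof (intro ballI impI)
    fix w :: "real vec" assume "w \<in> carrier_vec p" "Q *\<^sub>v w = 0\<^sub>v p"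
    then have zero: "vec_first w (p - r) = 0\<^sub>v (p - r) \<and> vec_last w r = 0\<^sub>v r"
      using Qw orthogonal_blocks_independent[OF a ap ainj apinj orth, of "vec_first w (p - r)" "vec_last w r"]
      by simp
    have "w = vec_first w (p - r) @\<^sub>v vec_last w r" by (rule split[OF \<open>w \<in> carrier_vec p\<close>])
    also have "\<dots> = 0\<^sub>v (p - r) @\<^sub>v 0\<^sub>v r" using zero by simp
    also have "\<dots> = 0\<^sub>v p" using rp by (intro eq_vecI) auto
    finally show "w = 0\<^sub>v p" .
  qed
  then obtain B where B: "B \<in> carrier_mat p p" "Q * B = 1\<^sub>m p"
    using square_mat_inverse_of_inj[OF Q] by blast
  have "Q *\<^sub>v (B *\<^sub>v u) = (Q * B) *\<^sub>v u" by (rule assoc_mult_mat_vec[symmetric, OF Q B(1) u])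
  then have "Q *\<^sub>v (B *\<^sub>v u) = u" using B u by simp
  then have "u = \<alpha>perp *\<^sub>v vec_first (B *\<^sub>v u) (p - r) + \<alpha> *\<^sub>v vec_last (B *\<^sub>v u) r"
    using Qw[of "B *\<^sub>v u"] B u by simp
  with that show thesis using vec_first_carrier vec_last_carrier by blast
qed

lemma block_index_less:
  fixes j l p k :: nat
  assumes "j < k - 1" "l < p"
  shows "j * p + l < p * (k - 1)"
proof -
  have "j * p + l < Suc j * p" using assms by simp
  also have "\<dots> \<le> (k - 1) * p" using assms by (intro mult_le_mono1) simp
  finally show ?thesis by (simp add: mult.commute)
qed

definition block_sum :: "nat \<Rightarrow> nat \<Rightarrow> real vec \<Rightarrow> real vec" where
  "block_sum p k d = vec p (\<lambda>l. \<Sum>j<k - 1. d $ (j * p + l))"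

definition tail_sums :: "nat \<Rightarrow> nat \<Rightarrow> real vec \<Rightarrow> real vec" where
  "tail_sums p k d = vec (p * (k - 1)) (\<lambda>a. \<Sum>j\<in>{a div p..<k - 1}. d $ (j * p + a mod p))"

lemma block_sum_carrier [simp]: "block_sum p k d \<in> carrier_vec p"
  by (simp add: block_sum_def)

lemma dim_block_sum [simp]: "dim_vec (block_sum p k d) = p"
  by (simp add: block_sum_def)

lemma tail_sums_carrier [simp]: "tail_sums p k d \<in> carrier_vec (p * (k - 1))"
  by (simp add: tail_sums_def)

lemma dim_tail_sums [simp]: "dim_vec (tail_sums p k d) = p * (k - 1)"
  by (simp add: tail_sums_def)

lemma Dmat_carrier [simp]: "Dmat p k \<in> carrier_mat (p * (k - 1)) (p * (k - 1))"
  by (simp add: Dmat_def)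

lemma dim_Dmat [simp]: "dim_row (Dmat p k) = p * (k - 1)" "dim_col (Dmat p k) = p * (k - 1)"
  by (simp_all add: Dmat_def)

lemma Etr_carrier [simp]: "Etr p k \<in> carrier_mat p (p * (k - 1))"
  by (simp add: Etr_def)

lemma block_sum_diff:
  assumes "d \<in> carrier_vec (p * (k - 1))" "d' \<in> carrier_vec (p * (k - 1))"
  shows "block_sum p k d - block_sum p k d' = block_sum p k (d - d')"
  using assms block_index_less by (intro eq_vecI) (auto simp: block_sum_def sum_subtractf)

lemma vnorm_block_sum_le:
  assumes d: "d \<in> carrier_vec (p * (k - 1))"
  shows "vnorm (block_sum p k d) \<le> real (p * (k - 1)) * vnorm d"
proof -
  have "\<bar>block_sum p k d $ l\<bar> \<le> (\<Sum>j<k - 1. vnorm d)" if "l < p" for l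
  proof -
    have "\<bar>block_sum p k d $ l\<bar> \<le> (\<Sum>j<k - 1. \<bar>d $ (j * p + l)\<bar>)"
      using that by (simp add: block_sum_def sum_abs)
    also have "\<dots> \<le> (\<Sum>j<k - 1. vnorm d)"
      using d that block_index_less by (intro sum_mono abs_index_le_vnorm) auto
    finally show ?thesis .
  qed
  then have "(\<Sum>l<p. \<bar>block_sum p k d $ l\<bar>) \<le> (\<Sum>l<p. \<Sum>j<k - 1. vnorm d)" by (intro sum_mono) auto
  with vnorm_le_sum_abs[of "block_sum p k d"] show ?thesis by (simp add: ac_simps)
qed

lemma Dmat_index:
  assumes p: "p > 0" and ab: "a < p * (k - 1)" "b < p * (k - 1)"
  shows "Dmat p k $$ (a, b) = (if b = a then -1 else if b = a + p then 1 else 0)"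
proof -
  have same: "(a mod p = b mod p \<and> a div p = b div p) \<longleftrightarrow> b = a"
    by (metis div_mult_mod_eq)
  have next_block: "(a mod p = b mod p \<and> b div p = a div p + 1) \<longleftrightarrow> b = a + p"
  proof
    assume "a mod p = b mod p \<and> b div p = a div p + 1"
    then have "b = (a div p + 1) * p + a mod p" by (metis div_mult_mod_eq)
    then show "b = a + p" by (simp add: algebra_simps)
  qed (use p in simp)
  show ?thesis using ab same next_block p unfolding Dmat_def by auto
qed

lemma tail_sums_index:
  assumes p: "p > 0" and a: "a < p * (k - 1)"
  shows "tail_sums p k d $ a = d $ a + (if a + p < p * (k - 1) then tail_sums p k d $ (a + p) else 0)"
proof -
  have "a div p < k - 1" using a p by (simp add: div_less_iff_less_mult mult.commute)
  then have "{a div p..<k - 1} = insert (a div p) {Suc (a div p)..<k - 1}" by auto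
  then have "tail_sums p k d $ a = d $ a + (\<Sum>j\<in>{Suc (a div p)..<k - 1}. d $ (j * p + a mod p))"
    using a by (simp add: tail_sums_def)
  moreover have "(a + p) div p = Suc (a div p)" "(a + p) mod p = a mod p" using p by auto
  moreover have "k - 1 \<le> Suc (a div p)" if "\<not> a + p < p * (k - 1)"
  proof (rule ccontr)
    assume "\<not> k - 1 \<le> Suc (a div p)"
    then have "p * Suc (Suc (a div p)) \<le> p * (k - 1)" by (intro mult_le_mono2) simp
    moreover have "a + p < p * Suc (Suc (a div p))"
    proof -
      have "a = p * (a div p) + a mod p" "p * Suc (Suc (a div p)) = p * (a div p) + 2 * p" by simp_all
      then show ?thesis using mod_less_divisor[OF p, of a] by linarith
    qed
    ultimately show False using that by simp
  qed
  ultimately show ?thesis by (auto simp: tail_sums_def)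
qed

text \<open>\<open>tail_sums\<close> solves \<open>D \<xi> = -d\<close> blockwise from the last block backwards, and its first
  block is then the block sum of \<open>d\<close>.\<close>

lemma Dmat_mult_tail_sums:
  assumes p: "p > 0" and d: "d \<in> carrier_vec (p * (k - 1))"
  shows "Dmat p k *\<^sub>v tail_sums p k d = - d"
proof (rule eq_vecI)
  let ?P = "p * (k - 1)" and ?\<xi> = "tail_sums p k d"
  fix a assume "a < dim_vec (- d)"
  then have a: "a < ?P" using d by simp
  have "(Dmat p k *\<^sub>v ?\<xi>) $ a = (\<Sum>b = 0..<?P. Dmat p k $$ (a, b) * ?\<xi> $ b)"
    using a by (auto simp: scalar_prod_def intro!: sum.cong)
  also have "\<dots> = (\<Sum>b = 0..<?P. (if b = a then - ?\<xi> $ b else 0) + (if b = a + p then ?\<xi> $ b else 0))"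
    using a p by (intro sum.cong) (auto simp: Dmat_index)
  also have "\<dots> = - ?\<xi> $ a + (if a + p < ?P then ?\<xi> $ (a + p) else 0)"
    using a by (simp add: sum.distrib)
  also have "\<dots> = (- d) $ a" using tail_sums_index[OF p a] a d by simp
  finally show "(Dmat p k *\<^sub>v ?\<xi>) $ a = (- d) $ a" .
qed (use d in simp)

lemma Etr_mult_tail_sums:
  assumes p: "p > 0"
  shows "Etr p k *\<^sub>v tail_sums p k d = block_sum p k d"
proof (rule eq_vecI)
  fix i assume "i < dim_vec (block_sum p k d)"
  then have i: "i < p" by simp
  have "(Etr p k *\<^sub>v tail_sums p k d) $ i = (\<Sum>j = 0..<p * (k - 1). (if i = j then 1 else 0) * tail_sums p k d $ j)"
    using i by (simp add: Etr_def scalar_prod_def)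
  also have "\<dots> = (\<Sum>j\<in>{0..<p * (k - 1)}. if j = i then tail_sums p k d $ j else 0)"
    by (rule sum.cong) auto
  also have "\<dots> = block_sum p k d $ i"
  proof (cases "k - 1 = 0")
    case False
    then have "p \<le> p * (k - 1)" by (simp add: Suc_leI)
    then have "i < p * (k - 1)" using i by linarith
    then show ?thesis using i by (simp add: tail_sums_def block_sum_def lessThan_atLeast0)
  qed (use i in \<open>simp add: block_sum_def\<close>)
  finally show "(Etr p k *\<^sub>v tail_sums p k d) $ i = block_sum p k d $ i" .
qed (simp add: Etr_def)

lemma bold_alpha_carrier:
  "\<alpha> \<in> carrier_mat p r \<Longrightarrow> bold_alpha p k r \<alpha> \<in> carrier_mat (p + p * (k - 1)) (r + p * (k - 1))"
  unfolding bold_alpha_def by (rule four_block_carrier_mat) auto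

lemma bold_alpha_mult_append:
  assumes a: "\<alpha> \<in> carrier_mat p r" and y: "y \<in> carrier_vec r" and x: "x \<in> carrier_vec (p * (k - 1))"
  shows "bold_alpha p k r \<alpha> *\<^sub>v (y @\<^sub>v x) = (\<alpha> *\<^sub>v y + Etr p k *\<^sub>v x) @\<^sub>v x"
proof -
  have "bold_alpha p k r \<alpha> *\<^sub>v (y @\<^sub>v x) =
     (\<alpha> *\<^sub>v y + Etr p k *\<^sub>v x) @\<^sub>v (0\<^sub>m (p * (k - 1)) r *\<^sub>v y + 1\<^sub>m (p * (k - 1)) *\<^sub>v x)"
    unfolding bold_alpha_def by (rule four_block_mat_mult_vec[OF a Etr_carrier _ _ y x]) auto
  then show ?thesis using x y by simp
qed

lemma D0mat_mult_append:
  assumes w: "w \<in> carrier_vec p" and x: "x \<in> carrier_vec (p * (k - 1))"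
  shows "D0mat p k r *\<^sub>v (w @\<^sub>v x) = 0\<^sub>v r @\<^sub>v (Dmat p k *\<^sub>v x)"
proof -
  have "D0mat p k r *\<^sub>v (w @\<^sub>v x) =
     (0\<^sub>m r p *\<^sub>v w + 0\<^sub>m r (p * (k - 1)) *\<^sub>v x) @\<^sub>v (0\<^sub>m (p * (k - 1)) p *\<^sub>v w + Dmat p k *\<^sub>v x)"
    unfolding D0mat_def by (rule four_block_mat_mult_vec[OF _ _ _ Dmat_carrier w x]) auto
  moreover have "Dmat p k *\<^sub>v x \<in> carrier_vec (p * (k - 1))" using mult_mat_vec_carrier[OF Dmat_carrier x] .
  ultimately show ?thesis using w x by simp
qed

text \<open>\<open>chi_core p k \<alpha>perp Th Gv\<close> is the map \<open>\<chi> \<circ> f\<^sub>0\<^sup>-\<^sup>1\<close>, written in terms of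
  \<open>Th = \<theta> \<circ> f\<^sub>0\<^sup>-\<^sup>1\<close> and \<open>Gv = \<^bold>g \<circ> f\<^sub>0\<^sup>-\<^sup>1\<close>.\<close>

definition chi_core ::
    "nat \<Rightarrow> nat \<Rightarrow> real mat \<Rightarrow> (real vec \<Rightarrow> real vec) \<Rightarrow> (real vec \<Rightarrow> real vec) \<Rightarrow> real vec \<Rightarrow> real vec" where
  "chi_core p k \<alpha>perp Th Gv w = (transpose_mat \<alpha>perp *\<^sub>v (w - block_sum p k (Gv w))) @\<^sub>v Th w"

text \<open>Condition (iii) of the class, stated for \<open>Th\<close> and \<open>Gv\<close> and with the joint spectral radius
  bound already specialised to the individual matrices.\<close>

definition stable_increments ::
    "nat \<Rightarrow> nat \<Rightarrow> nat \<Rightarrow> real mat \<Rightarrow> real \<Rightarrow> real \<Rightarrow> (real vec \<Rightarrow> real vec) \<Rightarrow> (real vec \<Rightarrow> real vec) \<Rightarrow> bool" where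
  "stable_increments p k r \<alpha> bbar \<rho> Th Gv \<longleftrightarrow>
     (\<forall>w\<in>carrier_vec p. Th w \<in> carrier_vec r \<and> Gv w \<in> carrier_vec (p * (k - 1))) \<and>
     (\<forall>z\<in>carrier_vec (p + p * (k - 1)). \<forall>z'\<in>carrier_vec (p + p * (k - 1)).
        \<exists>\<beta>\<in>carrier_mat (p + p * (k - 1)) (r + p * (k - 1)). mnorm \<beta> \<le> bbar
          \<and> sprad (1\<^sub>m (r + p * (k - 1)) + transpose_mat \<beta> * bold_alpha p k r \<alpha>) \<le> \<rho>
          \<and> (Th (vec_first z p) @\<^sub>v Gv (vec_first z p)) + D0mat p k r *\<^sub>v z
            - ((Th (vec_first z' p) @\<^sub>v Gv (vec_first z' p)) + D0mat p k r *\<^sub>v z')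
            = transpose_mat \<beta> *\<^sub>v (z - z'))"

lemma stable_increments_carrier:
  assumes "stable_increments p k r \<alpha> bbar \<rho> Th Gv" "w \<in> carrier_vec p"
  shows "Th w \<in> carrier_vec r" "Gv w \<in> carrier_vec (p * (k - 1))"
  using assms by (auto simp: stable_increments_def)

lemma stable_increments_append:
  assumes hyp: "stable_increments p k r \<alpha> bbar \<rho> Th Gv"
    and w: "w \<in> carrier_vec p" and w': "w' \<in> carrier_vec p" and \<xi>: "\<xi> \<in> carrier_vec (p * (k - 1))"
  obtains \<beta> where "\<beta> \<in> carrier_mat (p + p * (k - 1)) (r + p * (k - 1))" "mnorm \<beta> \<le> bbar"
    "sprad (1\<^sub>m (r + p * (k - 1)) + transpose_mat \<beta> * bold_alpha p k r \<alpha>) \<le> \<rho>"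
    "(Th w - Th w') @\<^sub>v (Gv w - Gv w' + Dmat p k *\<^sub>v \<xi>) = transpose_mat \<beta> *\<^sub>v ((w - w') @\<^sub>v \<xi>)"
proof -
  let ?P = "p * (k - 1)"
  have z: "w @\<^sub>v \<xi> \<in> carrier_vec (p + ?P)" "w' @\<^sub>v 0\<^sub>v ?P \<in> carrier_vec (p + ?P)" using w w' \<xi> by auto
  have first: "vec_first (w @\<^sub>v \<xi>) p = w" "vec_first (w' @\<^sub>v 0\<^sub>v ?P) p = w'"
    using w w' by (simp_all add: vec_first_append_vec)
  have D0: "D0mat p k r *\<^sub>v (w @\<^sub>v \<xi>) = 0\<^sub>v r @\<^sub>v (Dmat p k *\<^sub>v \<xi>)"
    "D0mat p k r *\<^sub>v (w' @\<^sub>v 0\<^sub>v ?P) = 0\<^sub>v r @\<^sub>v 0\<^sub>v ?P"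
    using D0mat_mult_append[OF w \<xi>] D0mat_mult_append[OF w' zero_carrier_vec]
      mult_mat_vec_zero_vec[OF Dmat_carrier[of p k]] by simp_all
  have c: "Th w \<in> carrier_vec r" "Th w' \<in> carrier_vec r" "Gv w \<in> carrier_vec ?P" "Gv w' \<in> carrier_vec ?P"
    "Dmat p k *\<^sub>v \<xi> \<in> carrier_vec ?P"
    using stable_increments_carrier[OF hyp] w w' mult_mat_vec_carrier[OF Dmat_carrier \<xi>] by auto
  obtain \<beta> where \<beta>: "\<beta> \<in> carrier_mat (p + ?P) (r + ?P)" "mnorm \<beta> \<le> bbar"
    "sprad (1\<^sub>m (r + ?P) + transpose_mat \<beta> * bold_alpha p k r \<alpha>) \<le> \<rho>"
    and eq: "(Th w @\<^sub>v Gv w) + (0\<^sub>v r @\<^sub>v (Dmat p k *\<^sub>v \<xi>)) - ((Th w' @\<^sub>v Gv w') + (0\<^sub>v r @\<^sub>v 0\<^sub>v ?P))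
      = transpose_mat \<beta> *\<^sub>v ((w @\<^sub>v \<xi>) - (w' @\<^sub>v 0\<^sub>v ?P))"
    using hyp[unfolded stable_increments_def, THEN conjunct2, rule_format, OF z, unfolded first D0]
    by blast
  have "(Th w @\<^sub>v Gv w) + (0\<^sub>v r @\<^sub>v (Dmat p k *\<^sub>v \<xi>)) - ((Th w' @\<^sub>v Gv w') + (0\<^sub>v r @\<^sub>v 0\<^sub>v ?P))
      = (Th w - Th w') @\<^sub>v (Gv w - Gv w' + Dmat p k *\<^sub>v \<xi>)"
    using c by (intro eq_vecI) auto
  moreover have "(w @\<^sub>v \<xi>) - (w' @\<^sub>v 0\<^sub>v ?P) = (w - w') @\<^sub>v \<xi>"
    using w w' \<xi> by (intro eq_vecI) auto
  ultimately show thesis using that[OF \<beta>] eq by simp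
qed

lemma stable_increments_bbar_nonneg:
  assumes "stable_increments p k r \<alpha> bbar \<rho> Th Gv"
  shows "0 \<le> bbar"
proof -
  obtain \<beta> where "\<beta> \<in> carrier_mat (p + p * (k - 1)) (r + p * (k - 1))" "mnorm \<beta> \<le> bbar"
    using stable_increments_append[OF assms, of "0\<^sub>v p" "0\<^sub>v p" "0\<^sub>v (p * (k - 1))"] by auto
  then show ?thesis using mnorm_nonneg by (meson order_trans)
qed

lemma vnorm_increments_le:
  assumes hyp: "stable_increments p k r \<alpha> bbar \<rho> Th Gv"
    and w: "w \<in> carrier_vec p" and w': "w' \<in> carrier_vec p"
  shows "vnorm ((Th w - Th w') @\<^sub>v (Gv w - Gv w')) \<le> bbar * vnorm (w - w')"
proof -
  let ?P = "p * (k - 1)"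
  obtain \<beta> where \<beta>: "\<beta> \<in> carrier_mat (p + ?P) (r + ?P)" "mnorm \<beta> \<le> bbar"
    and eq: "(Th w - Th w') @\<^sub>v (Gv w - Gv w' + Dmat p k *\<^sub>v 0\<^sub>v ?P) = transpose_mat \<beta> *\<^sub>v ((w - w') @\<^sub>v 0\<^sub>v ?P)"
    using stable_increments_append[OF hyp w w', of "0\<^sub>v ?P"] by auto
  have "Gv w - Gv w' + Dmat p k *\<^sub>v 0\<^sub>v ?P = Gv w - Gv w'"
    using stable_increments_carrier[OF hyp w] stable_increments_carrier[OF hyp w']
      mult_mat_vec_zero_vec[OF Dmat_carrier[of p k]] by simp
  then have "vnorm ((Th w - Th w') @\<^sub>v (Gv w - Gv w')) \<le> mnorm \<beta> * vnorm ((w - w') @\<^sub>v 0\<^sub>v ?P)"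
    using eq vnorm_transpose_mult_le_mnorm[OF \<beta>(1), of "(w - w') @\<^sub>v 0\<^sub>v ?P"] w w' by simp
  also have "\<dots> \<le> bbar * vnorm (w - w')"
    by (simp add: mult_right_mono[OF \<beta>(2) vnorm_nonneg])
  finally show ?thesis .
qed

lemma chi_core_diff:
  assumes ap: "\<alpha>perp \<in> carrier_mat p q"
    and Th: "Th w \<in> carrier_vec r" "Th w' \<in> carrier_vec r"
    and Gv: "Gv w \<in> carrier_vec (p * (k - 1))" "Gv w' \<in> carrier_vec (p * (k - 1))"
    and w: "w \<in> carrier_vec p" and w': "w' \<in> carrier_vec p"
  shows "chi_core p k \<alpha>perp Th Gv w - chi_core p k \<alpha>perp Th Gv w'
     = (transpose_mat \<alpha>perp *\<^sub>v ((w - w') - block_sum p k (Gv w - Gv w'))) @\<^sub>v (Th w - Th w')"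
proof -
  have "(w - block_sum p k (Gv w)) - (w' - block_sum p k (Gv w'))
      = (w - w') - (block_sum p k (Gv w) - block_sum p k (Gv w'))"
    using w w' by (intro eq_vecI) auto
  also have "block_sum p k (Gv w) - block_sum p k (Gv w') = block_sum p k (Gv w - Gv w')"
    by (rule block_sum_diff[OF Gv])
  finally have diff: "transpose_mat \<alpha>perp *\<^sub>v (w - block_sum p k (Gv w))
      - transpose_mat \<alpha>perp *\<^sub>v (w' - block_sum p k (Gv w'))
      = transpose_mat \<alpha>perp *\<^sub>v ((w - w') - block_sum p k (Gv w - Gv w'))"
    using ap w w' by (simp add: mult_minus_distrib_mat_vec[symmetric, of _ q p])
  have "transpose_mat \<alpha>perp *\<^sub>v (w - block_sum p k (Gv w)) \<in> carrier_vec q"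
    "transpose_mat \<alpha>perp *\<^sub>v (w' - block_sum p k (Gv w')) \<in> carrier_vec q"
    using ap by (auto intro!: carrier_vecI)
  from append_vec_diff[OF this Th] show ?thesis unfolding chi_core_def diff .
qed

lemma vnorm_chi_core_diff_le:
  assumes hyp: "stable_increments p k r \<alpha> bbar \<rho> Th Gv" and ap: "\<alpha>perp \<in> carrier_mat p q"
    and w: "w \<in> carrier_vec p" and w': "w' \<in> carrier_vec p"
  shows "vnorm (chi_core p k \<alpha>perp Th Gv w - chi_core p k \<alpha>perp Th Gv w')
    \<le> (mat_abs_sum (transpose_mat \<alpha>perp) * (1 + real (p * (k - 1)) * bbar) + bbar) * vnorm (w - w')"
proof -
  let ?P = "p * (k - 1)" and ?A = "mat_abs_sum (transpose_mat \<alpha>perp)"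
  define d \<eta> \<delta> where "d = w - w'" and "\<eta> = Th w - Th w'" and "\<delta> = Gv w - Gv w'"
  note c = stable_increments_carrier[OF hyp w] stable_increments_carrier[OF hyp w']
  have d: "d \<in> carrier_vec p" and \<delta>: "\<delta> \<in> carrier_vec ?P"
    using w w' c unfolding d_def \<delta>_def by auto
  have "vnorm (\<eta> @\<^sub>v \<delta>) \<le> bbar * vnorm d"
    unfolding d_def \<eta>_def \<delta>_def by (rule vnorm_increments_le[OF hyp w w'])
  then have inc: "vnorm \<eta> \<le> bbar * vnorm d" "vnorm \<delta> \<le> bbar * vnorm d"
    using vnorm_le_vnorm_append_left[of \<eta> \<delta>] vnorm_le_vnorm_append_right[of \<delta> \<eta>] by linarith+
  have "vnorm (d - block_sum p k \<delta>) \<le> vnorm d + real ?P * vnorm \<delta>"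
    using vnorm_diff_le[of d "block_sum p k \<delta>"] vnorm_block_sum_le[OF \<delta>] d by simp
  also have "\<dots> \<le> (1 + real ?P * bbar) * vnorm d"
    using mult_left_mono[OF inc(2), of "real ?P"] by (simp add: algebra_simps)
  finally have "vnorm (transpose_mat \<alpha>perp *\<^sub>v (d - block_sum p k \<delta>)) \<le> ?A * ((1 + real ?P * bbar) * vnorm d)"
    using vnorm_mult_mat_vec_le[of "d - block_sum p k \<delta>" "transpose_mat \<alpha>perp"] ap d
      mat_abs_sum_nonneg[of "transpose_mat \<alpha>perp"] by (simp add: mult_left_mono order_trans)
  moreover have "vnorm (chi_core p k \<alpha>perp Th Gv w - chi_core p k \<alpha>perp Th Gv w')
      \<le> vnorm (transpose_mat \<alpha>perp *\<^sub>v (d - block_sum p k \<delta>)) + vnorm \<eta>"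
    unfolding chi_core_diff[OF ap c(1) c(3) c(2) c(4) w w'] d_def \<delta>_def \<eta>_def by (rule vnorm_append_le)
  ultimately show ?thesis using inc(1) unfolding d_def by (simp add: algebra_simps)
qed

lemma bold_alpha_decomposition:
  assumes a: "\<alpha> \<in> carrier_mat p r" and ap: "\<alpha>perp \<in> carrier_mat p q" and p: "p > 0"
    and x: "x \<in> carrier_vec q" and y: "y \<in> carrier_vec r"
    and d: "d \<in> carrier_vec p" and \<delta>: "\<delta> \<in> carrier_vec (p * (k - 1))"
    and u: "d - block_sum p k \<delta> = \<alpha>perp *\<^sub>v x + \<alpha> *\<^sub>v y"
  shows "d @\<^sub>v tail_sums p k \<delta>
    = bold_alpha p k r \<alpha> *\<^sub>v (y @\<^sub>v tail_sums p k \<delta>) + ((\<alpha>perp *\<^sub>v x) @\<^sub>v 0\<^sub>v (p * (k - 1)))"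
proof -
  let ?\<xi> = "tail_sums p k \<delta>" and ?S = "block_sum p k \<delta>"
  have "bold_alpha p k r \<alpha> *\<^sub>v (y @\<^sub>v ?\<xi>) = (\<alpha> *\<^sub>v y + ?S) @\<^sub>v ?\<xi>"
    using bold_alpha_mult_append[OF a y tail_sums_carrier] Etr_mult_tail_sums[OF p] by simp
  moreover have "d $ i = (\<alpha> *\<^sub>v y) $ i + ?S $ i + (\<alpha>perp *\<^sub>v x) $ i" if "i < p" for i
    using arg_cong[OF u, of "\<lambda>v. v $ i"] that a ap d by simp
  ultimately show ?thesis using a ap d by (intro eq_vecI) auto
qed

lemma increment_tail_sums:
  assumes hyp: "stable_increments p k r \<alpha> bbar \<rho> Th Gv" and p: "p > 0"
    and w: "w \<in> carrier_vec p" and w': "w' \<in> carrier_vec p"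
  obtains \<beta> where "\<beta> \<in> carrier_mat (p + p * (k - 1)) (r + p * (k - 1))" "mnorm \<beta> \<le> bbar"
    "sprad (1\<^sub>m (r + p * (k - 1)) + transpose_mat \<beta> * bold_alpha p k r \<alpha>) \<le> \<rho>"
    "transpose_mat \<beta> *\<^sub>v ((w - w') @\<^sub>v tail_sums p k (Gv w - Gv w')) = (Th w - Th w') @\<^sub>v 0\<^sub>v (p * (k - 1))"
proof -
  let ?\<delta> = "Gv w - Gv w'"
  have \<delta>: "?\<delta> \<in> carrier_vec (p * (k - 1))"
    using stable_increments_carrier[OF hyp w] stable_increments_carrier[OF hyp w'] by auto
  have "?\<delta> + Dmat p k *\<^sub>v tail_sums p k ?\<delta> = 0\<^sub>v (p * (k - 1))"
    unfolding Dmat_mult_tail_sums[OF p \<delta>] using \<delta> by simp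
  then show thesis
    using stable_increments_append[OF hyp w w' tail_sums_carrier] that by metis
qed

lemma vnorm_lower_bound_perturbed:
  fixes \<beta> B :: "real mat"
  assumes \<beta>: "\<beta> \<in> carrier_mat m n" and B: "B \<in> carrier_mat m n"
    and s: "s \<in> carrier_vec n" and v: "v \<in> carrier_vec m"
    and low: "c * vnorm s \<le> vnorm (transpose_mat \<beta> *\<^sub>v (B *\<^sub>v s))"
    and eq: "transpose_mat \<beta> *\<^sub>v (B *\<^sub>v s + v) = e"
  shows "c * vnorm s \<le> vnorm e + mnorm \<beta> * vnorm v"
proof -
  have "transpose_mat \<beta> *\<^sub>v (B *\<^sub>v s + v) = transpose_mat \<beta> *\<^sub>v (B *\<^sub>v s) + transpose_mat \<beta> *\<^sub>v v"
    by (rule mult_add_distrib_mat_vec[of _ n m]) (use \<beta> B s v in auto)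
  then have "transpose_mat \<beta> *\<^sub>v (B *\<^sub>v s) = e - transpose_mat \<beta> *\<^sub>v v"
    using eq \<beta> B s v by (auto simp: vec_eq_iff)
  then have "vnorm (transpose_mat \<beta> *\<^sub>v (B *\<^sub>v s)) \<le> vnorm e + vnorm (transpose_mat \<beta> *\<^sub>v v)"
    using vnorm_diff_le[of e "transpose_mat \<beta> *\<^sub>v v"] eq \<beta> by auto
  then show ?thesis using low vnorm_transpose_mult_le_mnorm[OF \<beta> v] by linarith
qed

text \<open>The main estimate: write \<open>w - w'\<close> minus the block sum of the increment of \<open>Gv\<close> as
  \<open>\<alpha>\<^sub>\<bottom> x + \<alpha> y\<close>; the first component of \<open>chi_core\<close> controls \<open>x\<close>, and the stability of
  \<open>1 + \<beta>\<^sup>T \<alpha>\<close> turns the increment identity at \<open>(w, \<xi>)\<close>, \<open>(w', 0)\<close> into a bound on \<open>(y, \<xi>)\<close>,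
  where \<open>\<xi>\<close> are the tail sums of that increment.\<close>

lemma vnorm_diff_le_chi_core_diff:
  fixes \<alpha> \<alpha>perp G :: "real mat"
  assumes hyp: "stable_increments p k r \<alpha> bbar \<rho> Th Gv" and p: "p > 0" and rp: "r \<le> p"
    and a: "\<alpha> \<in> carrier_mat p r" and ap: "\<alpha>perp \<in> carrier_mat p (p - r)"
    and ainj: "\<forall>y\<in>carrier_vec r. \<alpha> *\<^sub>v y = 0\<^sub>v p \<longrightarrow> y = 0\<^sub>v r"
    and apinj: "\<forall>x\<in>carrier_vec (p - r). \<alpha>perp *\<^sub>v x = 0\<^sub>v p \<longrightarrow> x = 0\<^sub>v (p - r)"
    and orth: "transpose_mat \<alpha>perp * \<alpha> = 0\<^sub>m (p - r) r"
    and c: "c > 0"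
    and low: "\<And>\<beta> s. \<beta> \<in> carrier_mat (p + p * (k - 1)) (r + p * (k - 1)) \<Longrightarrow> mnorm \<beta> \<le> bbar \<Longrightarrow>
       sprad (1\<^sub>m (r + p * (k - 1)) + transpose_mat \<beta> * bold_alpha p k r \<alpha>) \<le> \<rho> \<Longrightarrow>
       s \<in> carrier_vec (r + p * (k - 1)) \<Longrightarrow> c * vnorm s \<le> vnorm (transpose_mat \<beta> *\<^sub>v (bold_alpha p k r \<alpha> *\<^sub>v s))"
    and G: "G \<in> carrier_mat (p - r) (p - r)"
      "\<And>x. x \<in> carrier_vec (p - r) \<Longrightarrow> G *\<^sub>v (transpose_mat \<alpha>perp *\<^sub>v (\<alpha>perp *\<^sub>v x)) = x"
    and w: "w \<in> carrier_vec p" and w': "w' \<in> carrier_vec p"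
  shows "vnorm (w - w') \<le> (mat_abs_sum (bold_alpha p k r \<alpha>) * (1 + bbar * mat_abs_sum \<alpha>perp * mat_abs_sum G) / c
      + mat_abs_sum \<alpha>perp * mat_abs_sum G) * vnorm (chi_core p k \<alpha>perp Th Gv w - chi_core p k \<alpha>perp Th Gv w')"
proof -
  let ?P = "p * (k - 1)" and ?bA = "bold_alpha p k r \<alpha>" and ?A = "mat_abs_sum \<alpha>perp"
  let ?Pd = "vnorm (chi_core p k \<alpha>perp Th Gv w - chi_core p k \<alpha>perp Th Gv w')"
  define d \<delta> \<eta> where "d = w - w'" and "\<delta> = Gv w - Gv w'" and "\<eta> = Th w - Th w'"
  note cw = stable_increments_carrier[OF hyp w] and cw' = stable_increments_carrier[OF hyp w']
  have d: "d \<in> carrier_vec p" and \<delta>: "\<delta> \<in> carrier_vec ?P" and \<eta>: "\<eta> \<in> carrier_vec r"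
    using w w' cw cw' unfolding d_def \<delta>_def \<eta>_def by auto
  have b0: "0 \<le> bbar" by (rule stable_increments_bbar_nonneg[OF hyp])
  obtain x y where x: "x \<in> carrier_vec (p - r)" and y: "y \<in> carrier_vec r"
    and u: "d - block_sum p k \<delta> = \<alpha>perp *\<^sub>v x + \<alpha> *\<^sub>v y"
    using orthogonal_blocks_decomposition[OF a ap rp ainj apinj orth, of "d - block_sum p k \<delta>"] d by auto
  have "chi_core p k \<alpha>perp Th Gv w - chi_core p k \<alpha>perp Th Gv w'
      = (transpose_mat \<alpha>perp *\<^sub>v (\<alpha>perp *\<^sub>v x)) @\<^sub>v \<eta>"
    unfolding chi_core_diff[OF ap cw(1) cw'(1) cw(2) cw'(2) w w'] d_def[symmetric] \<delta>_def[symmetric]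
      \<eta>_def[symmetric] u transpose_mult_orthogonal_sum[OF a ap orth x y] ..
  then have Pd: "vnorm (transpose_mat \<alpha>perp *\<^sub>v (\<alpha>perp *\<^sub>v x)) \<le> ?Pd" "vnorm \<eta> \<le> ?Pd"
    using vnorm_le_vnorm_append_left vnorm_le_vnorm_append_right by metis+
  have "vnorm x \<le> mat_abs_sum G * vnorm (transpose_mat \<alpha>perp *\<^sub>v (\<alpha>perp *\<^sub>v x))"
    using vnorm_mult_mat_vec_le[of "transpose_mat \<alpha>perp *\<^sub>v (\<alpha>perp *\<^sub>v x)" G] G ap x by simp
  then have hx: "vnorm x \<le> mat_abs_sum G * ?Pd"
    using Pd(1) mat_abs_sum_nonneg[of G] by (meson mult_left_mono order_trans)
  obtain \<beta> where \<beta>: "\<beta> \<in> carrier_mat (p + ?P) (r + ?P)" "mnorm \<beta> \<le> bbar"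
    "sprad (1\<^sub>m (r + ?P) + transpose_mat \<beta> * ?bA) \<le> \<rho>"
    and inc: "transpose_mat \<beta> *\<^sub>v (d @\<^sub>v tail_sums p k \<delta>) = \<eta> @\<^sub>v 0\<^sub>v ?P"
    using increment_tail_sums[OF hyp p w w'] unfolding d_def \<delta>_def \<eta>_def by blast
  note key = bold_alpha_decomposition[OF a ap p x y d \<delta> u]
  let ?s = "y @\<^sub>v tail_sums p k \<delta>" and ?v = "(\<alpha>perp *\<^sub>v x) @\<^sub>v 0\<^sub>v ?P"
  have s: "?s \<in> carrier_vec (r + ?P)" by (rule append_carrier_vec[OF y tail_sums_carrier])
  have v: "?v \<in> carrier_vec (p + ?P)" by (rule append_carrier_vec) (use ap x in auto)
  have "c * vnorm ?s \<le> vnorm (\<eta> @\<^sub>v 0\<^sub>v ?P) + mnorm \<beta> * vnorm ?v"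
    using vnorm_lower_bound_perturbed[OF \<beta>(1) bold_alpha_carrier[OF a] s v low[OF \<beta> s]] inc key by simp
  also have "\<dots> \<le> ?Pd + bbar * (?A * (mat_abs_sum G * ?Pd))"
    using Pd(2) \<beta>(2) b0 hx vnorm_mult_mat_vec_le[of x \<alpha>perp] ap x mat_abs_sum_nonneg[of \<alpha>perp]
    by (auto intro!: add_mono mult_mono order_trans[OF _ mult_left_mono[OF hx]] simp: vnorm_nonneg)
  finally have hs: "vnorm ?s \<le> (1 + bbar * ?A * mat_abs_sum G) * ?Pd / c"
    using c by (simp add: le_divide_eq algebra_simps)
  have "vnorm d \<le> vnorm (d @\<^sub>v tail_sums p k \<delta>)" by (rule vnorm_le_vnorm_append_left)
  also have "\<dots> \<le> vnorm (?bA *\<^sub>v ?s) + vnorm ?v"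
    unfolding key by (rule vnorm_add_le) (use bold_alpha_carrier[OF a, of k] ap in simp)
  also have "\<dots> \<le> mat_abs_sum ?bA * vnorm ?s + ?A * vnorm x"
    using vnorm_mult_mat_vec_le[of ?s ?bA] vnorm_mult_mat_vec_le[of x \<alpha>perp] bold_alpha_carrier[OF a, of k] ap s x y
    by (intro add_mono) auto
  also have "\<dots> \<le> mat_abs_sum ?bA * ((1 + bbar * ?A * mat_abs_sum G) * ?Pd / c) + ?A * (mat_abs_sum G * ?Pd)"
    by (intro add_mono mult_left_mono hs hx mat_abs_sum_nonneg)
  finally show ?thesis unfolding d_def by (simp add: algebra_simps)
qed

lemma chi_core_co_lipschitz:
  fixes \<alpha> \<alpha>perp :: "real mat"
  assumes p: "p > 0" and rp: "r \<le> p" and \<rho>: "\<rho> < 1"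
    and a: "\<alpha> \<in> carrier_mat p r" and ap: "\<alpha>perp \<in> carrier_mat p (p - r)"
    and ainj: "\<forall>y\<in>carrier_vec r. \<alpha> *\<^sub>v y = 0\<^sub>v p \<longrightarrow> y = 0\<^sub>v r"
    and apinj: "\<forall>x\<in>carrier_vec (p - r). \<alpha>perp *\<^sub>v x = 0\<^sub>v p \<longrightarrow> x = 0\<^sub>v (p - r)"
    and orth: "transpose_mat \<alpha>perp * \<alpha> = 0\<^sub>m (p - r) r"
  obtains C where "0 \<le> C" "\<forall>Th Gv. stable_increments p k r \<alpha> bbar \<rho> Th Gv \<longrightarrow>
    (\<forall>w\<in>carrier_vec p. \<forall>w'\<in>carrier_vec p.
      vnorm (w - w') \<le> C * vnorm (chi_core p k \<alpha>perp Th Gv w - chi_core p k \<alpha>perp Th Gv w'))"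
proof -
  let ?N = "r + p * (k - 1)" and ?bA = "bold_alpha p k r \<alpha>"
  have bA: "?bA \<in> carrier_mat (p + p * (k - 1)) ?N" by (rule bold_alpha_carrier[OF a])
  obtain c where c: "c > 0" and low: "\<And>A s. A \<in> carrier_mat ?N ?N \<Longrightarrow>
      \<forall>i<?N. \<forall>j<?N. \<bar>A $$ (i,j)\<bar> \<le> \<bar>bbar\<bar> * mat_abs_sum ?bA \<Longrightarrow> sprad (1\<^sub>m ?N + A) \<le> \<rho> \<Longrightarrow>
      s \<in> carrier_vec ?N \<Longrightarrow> c * vnorm s \<le> vnorm (A *\<^sub>v s)"
    using uniform_lower_bound_of_sprad[OF mult_nonneg_nonneg[OF abs_ge_zero mat_abs_sum_nonneg] \<rho>] by blast
  have low_\<beta>: "c * vnorm s \<le> vnorm (transpose_mat \<beta> *\<^sub>v (?bA *\<^sub>v s))"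
    if \<beta>: "\<beta> \<in> carrier_mat (p + p * (k - 1)) ?N" "mnorm \<beta> \<le> bbar"
      "sprad (1\<^sub>m ?N + transpose_mat \<beta> * ?bA) \<le> \<rho>" and s: "s \<in> carrier_vec ?N" for \<beta> s
  proof -
    have "\<bar>(transpose_mat \<beta> * ?bA) $$ (i,j)\<bar> \<le> \<bar>bbar\<bar> * mat_abs_sum ?bA" if "i < ?N" "j < ?N" for i j
      using abs_transpose_mult_entry_le[OF \<beta>(1) bA that] \<beta>(2) mat_abs_sum_nonneg[of ?bA]
      by (meson abs_ge_self mult_right_mono order_trans)
    then have "c * vnorm s \<le> vnorm ((transpose_mat \<beta> * ?bA) *\<^sub>v s)"
      using \<beta>(1) bA by (intro low \<beta>(3) s) auto
    also have "(transpose_mat \<beta> * ?bA) *\<^sub>v s = transpose_mat \<beta> *\<^sub>v (?bA *\<^sub>v s)"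
      by (rule assoc_mult_mat_vec) (use \<beta>(1) bA s in auto)
    finally show ?thesis .
  qed
  obtain G where G: "G \<in> carrier_mat (p - r) (p - r)"
    "\<And>x. x \<in> carrier_vec (p - r) \<Longrightarrow> G *\<^sub>v (transpose_mat \<alpha>perp *\<^sub>v (\<alpha>perp *\<^sub>v x)) = x"
    by (rule gram_left_inverse[OF ap apinj]) blast
  define C0 where "C0 = mat_abs_sum ?bA * (1 + bbar * mat_abs_sum \<alpha>perp * mat_abs_sum G) / c
      + mat_abs_sum \<alpha>perp * mat_abs_sum G"
  show thesis
  proof (rule that[of "\<bar>C0\<bar>"], simp, intro allI impI ballI)
    fix Th Gv :: "real vec \<Rightarrow> real vec" and w w' :: "real vec"
    assume hyp: "stable_increments p k r \<alpha> bbar \<rho> Th Gv"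
      and w: "w \<in> carrier_vec p" and w': "w' \<in> carrier_vec p"
    have "vnorm (w - w') \<le> C0 * vnorm (chi_core p k \<alpha>perp Th Gv w - chi_core p k \<alpha>perp Th Gv w')"
      unfolding C0_def by (rule vnorm_diff_le_chi_core_diff[OF hyp p rp a ap ainj apinj orth c low_\<beta> G w w'])
    then show "vnorm (w - w') \<le> \<bar>C0\<bar> * vnorm (chi_core p k \<alpha>perp Th Gv w - chi_core p k \<alpha>perp Th Gv w')"
      by (meson abs_ge_self mult_right_mono order_trans vnorm_nonneg)
  qed
qed

lemma gvec_index:
  assumes "j < k - 1" "l < p"
  shows "gvec p k f z $ (j * p + l) = gmap p k f (Suc j) z $ l"
  using assms block_index_less[OF assms] by (simp add: gvec_def)

lemma block_sum_gvec:
  "block_sum p k (gvec p k f z) = vec p (\<lambda>l. \<Sum>i\<in>{1..k - 1}. gmap p k f i z $ l)"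
proof -
  have "(\<Sum>j<k - 1. gvec p k f z $ (j * p + l)) = (\<Sum>i\<in>{1..k - 1}. gmap p k f i z $ l)" if "l < p" for l
  proof -
    have "(\<Sum>j<k - 1. gvec p k f z $ (j * p + l)) = (\<Sum>j<k - 1. gmap p k f (Suc j) z $ l)"
      using that by (intro sum.cong) (auto simp: gvec_index)
    also have "\<dots> = (\<Sum>i\<in>{1..k - 1}. gmap p k f i z $ l)" by (simp add: sum.atLeast1_atMost_eq)
    finally show ?thesis .
  qed
  then show ?thesis by (intro eq_vecI) (auto simp: block_sum_def)
qed

lemma chi_map_eq_chi_core:
  fixes f :: "nat \<Rightarrow> real vec \<Rightarrow> real vec"
  assumes bij: "bij_betw (f 0) (carrier_vec p) (carrier_vec p)" and z: "z \<in> carrier_vec p"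
  shows "chi_map p k \<alpha>perp f \<theta> z
    = chi_core p k \<alpha>perp (\<lambda>w. \<theta> (the_inv_into (carrier_vec p) (f 0) w))
        (\<lambda>w. gvec p k f (the_inv_into (carrier_vec p) (f 0) w)) (f 0 z)"
proof -
  have inv: "the_inv_into (carrier_vec p) (f 0) (f 0 z) = z"
    by (rule the_inv_into_f_f[OF bij_betw_imp_inj_on[OF bij] z])
  have "f 0 z \<in> carrier_vec p" using bij_betw_apply[OF bij z] .
  then have "vec p (\<lambda>l. f 0 z $ l - (\<Sum>i\<in>{1..k - 1}. gmap p k f i z $ l)) = f 0 z - block_sum p k (gvec p k f z)"
    unfolding block_sum_gvec by (intro eq_vecI) auto
  then show ?thesis unfolding chi_map_def psi_map_def chi_core_def inv by simp
qed

lemma in_class_stable_increments: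
  fixes f :: "nat \<Rightarrow> real vec \<Rightarrow> real vec"
  assumes k: "k \<ge> 1" and a: "\<alpha> \<in> carrier_mat p r" and ic: "in_class p k r \<alpha> bbar \<rho> c f \<theta>"
  shows "stable_increments p k r \<alpha> bbar \<rho> (\<lambda>w. \<theta> (the_inv_into (carrier_vec p) (f 0) w))
    (\<lambda>w. gvec p k f (the_inv_into (carrier_vec p) (f 0) w))"
  unfolding stable_increments_def
proof (rule conjI; intro ballI)
  let ?f0' = "the_inv_into (carrier_vec p) (f 0)"
  have bij: "bij_betw (f 0) (carrier_vec p) (carrier_vec p)" using ic by (simp add: in_class_def vhomeo_def)
  fix w :: "real vec" assume "w \<in> carrier_vec p"
  then have "?f0' w \<in> carrier_vec p" using bij_betw_apply[OF bij_betw_the_inv_into[OF bij]] by blast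
  then show "\<theta> (?f0' w) \<in> carrier_vec r \<and> gvec p k f (?f0' w) \<in> carrier_vec (p * (k - 1))"
    using ic by (simp add: in_class_def gvec_def)
next
  let ?P = "p * (k - 1)" and ?N = "p * (k - 1) + r" and ?bA = "bold_alpha p k r \<alpha>"
  have kp: "k * p = p + ?P" using k by (cases k) auto
  obtain B where B: "closed_mat_set (k * p) ?N B" "\<forall>\<beta>\<in>B. mnorm \<beta> \<le> bbar"
    "jsr ?N {1\<^sub>m ?N + transpose_mat \<beta> * ?bA | \<beta>. \<beta> \<in> B} \<le> ereal \<rho>"
    and inc: "\<forall>z\<in>carrier_vec (k * p). \<forall>z'\<in>carrier_vec (k * p). \<exists>\<beta>\<in>B.
      (bold_theta p k f \<theta> (the_inv_into (carrier_vec p) (f 0) (vec_first z p)) + D0mat p k r *\<^sub>v z)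
      - (bold_theta p k f \<theta> (the_inv_into (carrier_vec p) (f 0) (vec_first z' p)) + D0mat p k r *\<^sub>v z')
      = transpose_mat \<beta> *\<^sub>v (z - z')"
    using ic unfolding in_class_def by blast
  have Bc: "B \<subseteq> carrier_mat (p + ?P) (r + ?P)"
    using B(1) kp unfolding closed_mat_set_def by (simp add: add.commute)
  have bA: "?bA \<in> carrier_mat (p + ?P) (r + ?P)" by (rule bold_alpha_carrier[OF a])
  fix z z' :: "real vec" assume "z \<in> carrier_vec (p + ?P)" "z' \<in> carrier_vec (p + ?P)"
  then obtain \<beta> where \<beta>: "\<beta> \<in> B"
    and eq: "(bold_theta p k f \<theta> (the_inv_into (carrier_vec p) (f 0) (vec_first z p)) + D0mat p k r *\<^sub>v z)
      - (bold_theta p k f \<theta> (the_inv_into (carrier_vec p) (f 0) (vec_first z' p)) + D0mat p k r *\<^sub>v z')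
      = transpose_mat \<beta> *\<^sub>v (z - z')"
    using inc kp by auto
  have "ereal (sprad (1\<^sub>m ?N + transpose_mat \<beta> * ?bA)) \<le> jsr ?N {1\<^sub>m ?N + transpose_mat \<beta> * ?bA | \<beta>. \<beta> \<in> B}"
    using Bc bA \<beta> by (intro sprad_le_jsr) (auto simp: add.commute)
  also note B(3)
  finally have "sprad (1\<^sub>m ?N + transpose_mat \<beta> * ?bA) \<le> \<rho>" by simp
  then have "sprad (1\<^sub>m (r + ?P) + transpose_mat \<beta> * ?bA) \<le> \<rho>" by (simp add: add.commute)
  then show "\<exists>\<beta>\<in>carrier_mat (p + ?P) (r + ?P). mnorm \<beta> \<le> bbar
      \<and> sprad (1\<^sub>m (r + ?P) + transpose_mat \<beta> * ?bA) \<le> \<rho>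
      \<and> (\<theta> (the_inv_into (carrier_vec p) (f 0) (vec_first z p))
            @\<^sub>v gvec p k f (the_inv_into (carrier_vec p) (f 0) (vec_first z p))) + D0mat p k r *\<^sub>v z
        - ((\<theta> (the_inv_into (carrier_vec p) (f 0) (vec_first z' p))
            @\<^sub>v gvec p k f (the_inv_into (carrier_vec p) (f 0) (vec_first z' p))) + D0mat p k r *\<^sub>v z')
        = transpose_mat \<beta> *\<^sub>v (z - z')"
    using Bc \<beta> B(2) eq unfolding bold_theta_def by blast
qed

lemma vcont_on_of_lipschitz_after_inverse:
  assumes f: "vhomeo p f"
    and lip: "\<forall>w\<in>carrier_vec p. \<forall>w'\<in>carrier_vec p.
      vnorm (h (the_inv_into (carrier_vec p) f w) - h (the_inv_into (carrier_vec p) f w')) \<le> L * vnorm (w - w')"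
  shows "vcont_on p h"
proof -
  have bij: "bij_betw f (carrier_vec p) (carrier_vec p)" using f by (simp add: vhomeo_def)
  have "vcont_on p (\<lambda>z. h (the_inv_into (carrier_vec p) f (f z)))"
    by (rule vcont_on_compose[OF _ _ lipschitz_imp_vcont_on[OF lip]])
      (use f bij_betw_apply[OF bij] in \<open>auto simp: vhomeo_def\<close>)
  then show ?thesis
    by (rule vcont_on_cong) (simp add: the_inv_into_f_f[OF bij_betw_imp_inj_on[OF bij]])
qed

lemma vnorm_mult_mat_vec_diff_le:
  assumes A: "A \<in> carrier_mat q r" and u: "u \<in> carrier_vec r" and v: "v \<in> carrier_vec r"
    and lip: "vnorm (u - v) \<le> L * t"
  shows "vnorm (A *\<^sub>v u - A *\<^sub>v v) \<le> mat_abs_sum A * L * t"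
proof -
  have "vnorm (A *\<^sub>v u - A *\<^sub>v v) = vnorm (A *\<^sub>v (u - v))"
    using A u v by (simp add: mult_minus_distrib_mat_vec)
  also have "\<dots> \<le> mat_abs_sum A * vnorm (u - v)" using A v by (intro vnorm_mult_mat_vec_le) simp
  also have "\<dots> \<le> mat_abs_sum A * (L * t)" by (rule mult_left_mono[OF lip mat_abs_sum_nonneg])
  finally show ?thesis by (simp add: mult.assoc)
qed

lemma vnorm_gmap_diff_le:
  assumes j: "1 \<le> j" "j \<le> k - 1"
  shows "vnorm (gmap p k f j z - gmap p k f j z') \<le> vnorm (gvec p k f z - gvec p k f z')"
proof (rule vnorm_le_of_slice[where s = "(j - 1) * p"])
  show "(j - 1) * p + p \<le> dim_vec (gvec p k f z - gvec p k f z')"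
    using j mult_le_mono1[of j "k - 1" p] by (simp add: gvec_def algebra_simps)
  fix l assume "l < p"
  then show "(gmap p k f j z - gmap p k f j z') $ l = (gvec p k f z - gvec p k f z') $ ((j - 1) * p + l)"
    using j gvec_index[of "j - 1" k l p] block_index_less[of "j - 1" k l p] by (simp add: gmap_def gvec_def)
qed (simp add: gmap_def)

lemma f_eq_gmap_diff:
  assumes i: "1 \<le> i" "i \<le> k" and fi: "f i z \<in> carrier_vec p"
  shows "f i z = gmap p k f i z - gmap p k f (i - 1) z"
proof (rule eq_vecI)
  fix l assume "l < dim_vec (gmap p k f i z - gmap p k f (i - 1) z)"
  then have l: "l < p" by (simp add: gmap_def)
  have "{i - 1 + 1..k} = insert i {i + 1..k}" using i by auto
  then show "f i z $ l = (gmap p k f i z - gmap p k f (i - 1) z) $ l" using l by (simp add: gmap_def)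
qed (use fi in \<open>simp add: gmap_def\<close>)

lemma gmap_0_eq:
  assumes a: "\<alpha> \<in> carrier_mat p r" and \<theta>: "\<theta> z \<in> carrier_vec r" and f0: "f 0 z \<in> carrier_vec p"
    and \<pi>: "pimap p k f z = \<alpha> *\<^sub>v \<theta> z"
  shows "gmap p k f 0 z = (- \<alpha>) *\<^sub>v \<theta> z - f 0 z"
proof (rule eq_vecI)
  fix l assume "l < dim_vec ((- \<alpha>) *\<^sub>v \<theta> z - f 0 z)"
  then have l: "l < p" using f0 by simp
  have "(\<alpha> *\<^sub>v \<theta> z) $ l = - f 0 z $ l + (\<Sum>i\<in>{1..k}. f i z $ l)"
    using arg_cong[OF \<pi>, of "\<lambda>v. v $ l"] l by (simp add: pimap_def)
  then show "gmap p k f 0 z $ l = ((- \<alpha>) *\<^sub>v \<theta> z - f 0 z) $ l" using l a \<theta> f0 by (simp add: gmap_def)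
qed (use f0 in \<open>simp add: gmap_def\<close>)

lemma in_class_gmap_continuous:
  fixes f :: "nat \<Rightarrow> real vec \<Rightarrow> real vec"
  assumes k: "k \<ge> 1" and a: "\<alpha> \<in> carrier_mat p r" and ic: "in_class p k r \<alpha> bbar \<rho> c f \<theta>"
    and f0: "\<forall>z\<in>carrier_vec p. f 0 z \<in> carrier_vec p" and j: "j \<le> k - 1"
  shows "vcont_on p (gmap p k f j)"
proof -
  let ?f0' = "the_inv_into (carrier_vec p) (f 0)"
  note hyp = in_class_stable_increments[OF k a ic]
  have h0: "vhomeo p (f 0)" using ic by (simp add: in_class_def)
  have inc: "vnorm (\<theta> (?f0' w) - \<theta> (?f0' w')) \<le> bbar * vnorm (w - w')"
    "vnorm (gvec p k f (?f0' w) - gvec p k f (?f0' w')) \<le> bbar * vnorm (w - w')"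
    if "w \<in> carrier_vec p" "w' \<in> carrier_vec p" for w w'
    using vnorm_increments_le[OF hyp that] vnorm_le_vnorm_append_left vnorm_le_vnorm_append_right
    by (meson order_trans)+
  show ?thesis
  proof (cases "j = 0")
    case True
    have \<theta>_carrier: "\<theta> z \<in> carrier_vec r" and \<pi>_eq: "pimap p k f z = \<alpha> *\<^sub>v \<theta> z"
      if "z \<in> carrier_vec p" for z
      using ic that by (auto simp: in_class_def)
    have "vcont_on p (\<lambda>z. (- \<alpha>) *\<^sub>v \<theta> z)"
      using vnorm_mult_mat_vec_diff_le[of "- \<alpha>" p r, OF _ _ _ inc(1)] stable_increments_carrier(1)[OF hyp] a
      by (intro vcont_on_of_lipschitz_after_inverse[OF h0] ballI) auto
    moreover have "vcont_on p (f 0)" using h0 by (simp add: vhomeo_def)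
    ultimately have "vcont_on p (\<lambda>z. (- \<alpha>) *\<^sub>v \<theta> z - f 0 z)"
      using f0 a \<theta>_carrier by (intro vcont_on_diff[where q = p]) auto
    moreover have "gmap p k f 0 z = (- \<alpha>) *\<^sub>v \<theta> z - f 0 z" if z: "z \<in> carrier_vec p" for z
      using gmap_0_eq[of \<alpha> p r \<theta> z f k, OF a \<theta>_carrier[OF z] bspec[OF f0 z] \<pi>_eq[OF z]] .
    ultimately show ?thesis unfolding True by (rule vcont_on_cong)
  next
    case False
    then show ?thesis
      using j inc(2) vnorm_gmap_diff_le[of j k p f] order_trans
      by (intro vcont_on_of_lipschitz_after_inverse[OF h0]) (auto, blast)
  qed
qed

lemma in_class_f_continuous:
  fixes f :: "nat \<Rightarrow> real vec \<Rightarrow> real vec"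
  assumes k: "k \<ge> 1" and a: "\<alpha> \<in> carrier_mat p r" and ic: "in_class p k r \<alpha> bbar \<rho> c f \<theta>"
    and fc: "\<forall>i\<le>k. \<forall>z\<in>carrier_vec p. f i z \<in> carrier_vec p" and i: "i \<in> {1..k - 1}"
  shows "vcont_on p (f i)"
proof -
  have "vcont_on p (\<lambda>z. gmap p k f i z - gmap p k f (i - 1) z)"
    using i fc by (intro vcont_on_diff[where q = p] in_class_gmap_continuous[OF k a ic]) (auto simp: gmap_def)
  moreover have "f i z = gmap p k f i z - gmap p k f (i - 1) z" if "z \<in> carrier_vec p" for z
    using f_eq_gmap_diff[of i k f z p] fc i that by auto
  ultimately show ?thesis by (rule vcont_on_cong)
qed

lemma bilip_pos:
  assumes bl: "bilip p f C" and f: "\<forall>z\<in>carrier_vec p. f z \<in> carrier_vec p"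
    and inj: "inj_on f (carrier_vec p)" and p: "p > 0"
  shows "C > 0"
proof (rule ccontr)
  assume "\<not> C > 0"
  let ?x = "0\<^sub>v p :: real vec" and ?y = "unit_vec p 0 :: real vec"
  have xy: "?x \<in> carrier_vec p" "?y \<in> carrier_vec p" "?x \<noteq> ?y" using p by (auto simp: vec_eq_iff)
  then have "vnorm (f ?x - f ?y) \<noteq> 0" using inj f vnorm_diff_eq_0_iff[of "f ?x" p "f ?y"] by (auto dest: inj_onD)
  moreover have "vnorm (f ?x - f ?y) \<le> C * vnorm (?x - ?y)" using bl xy(1,2) unfolding bilip_def by blast
  ultimately show False
    using \<open>\<not> C > 0\<close> vnorm_nonneg[of "?x - ?y"] vnorm_nonneg[of "f ?x - f ?y"]
    by (meson antisym mult_nonpos_nonneg not_less order_trans)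
qed

lemma bilip_compose:
  assumes bl: "bilip p f Cf" and Cf: "Cf > 0" and f: "\<forall>z\<in>carrier_vec p. f z \<in> carrier_vec p"
    and L: "0 \<le> L" and C: "0 \<le> C"
    and up: "\<forall>w\<in>carrier_vec p. \<forall>w'\<in>carrier_vec p. vnorm (F w - F w') \<le> L * vnorm (w - w')"
    and low: "\<forall>w\<in>carrier_vec p. \<forall>w'\<in>carrier_vec p. vnorm (w - w') \<le> C * vnorm (F w - F w')"
  shows "bilip p (\<lambda>z. F (f z)) ((L + C + 1) * Cf)"
  unfolding bilip_def
proof (intro ballI conjI)
  fix x y :: "real vec" assume x: "x \<in> carrier_vec p" and y: "y \<in> carrier_vec p"
  have fx: "f x \<in> carrier_vec p" "f y \<in> carrier_vec p" using f x y by auto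
  have b: "vnorm (x - y) \<le> Cf * vnorm (f x - f y)" "vnorm (f x - f y) \<le> Cf * vnorm (x - y)"
    using bl x y Cf by (auto simp: bilip_def field_simps)
  have "vnorm (F (f x) - F (f y)) \<le> L * (Cf * vnorm (x - y))"
    using up fx b(2) L by (meson mult_left_mono order_trans)
  also have "\<dots> \<le> (L + C + 1) * Cf * vnorm (x - y)"
    using C Cf vnorm_nonneg[of "x - y"] by (simp add: algebra_simps mult_nonneg_nonneg)
  finally show "vnorm (F (f x) - F (f y)) \<le> (L + C + 1) * Cf * vnorm (x - y)" .
  have "vnorm (x - y) \<le> Cf * (C * vnorm (F (f x) - F (f y)))"
    using low fx b(1) Cf by (meson mult_left_mono order_trans less_imp_le)
  also have "\<dots> \<le> (L + C + 1) * Cf * vnorm (F (f x) - F (f y))"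
    using L Cf vnorm_nonneg[of "F (f x) - F (f y)"] by (simp add: algebra_simps mult_nonneg_nonneg)
  moreover have "(L + C + 1) * Cf > 0" using L C Cf by simp
  ultimately show "inverse ((L + C + 1) * Cf) * vnorm (x - y) \<le> vnorm (F (f x) - F (f y))"
    by (simp add: inverse_eq_divide pos_divide_le_eq mult.commute)
qed

lemma chi_core_carrier:
  assumes "\<alpha>perp \<in> carrier_mat p (p - r)" "r \<le> p" "Th w \<in> carrier_vec r"
  shows "chi_core p k \<alpha>perp Th Gv w \<in> carrier_vec p"
proof -
  have "chi_core p k \<alpha>perp Th Gv w \<in> carrier_vec ((p - r) + r)"
    unfolding chi_core_def using assms by (intro append_carrier_vec) (auto intro!: carrier_vecI)
  then show ?thesis using assms(2) by simp
qed

lemma bilip_cong: "bilip p g C \<Longrightarrow> (\<And>z. z \<in> carrier_vec p \<Longrightarrow> h z = g z) \<Longrightarrow> bilip p h C"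
  by (simp add: bilip_def)

lemma in_class_chi_vhomeo_bilip:
  fixes f :: "nat \<Rightarrow> real vec \<Rightarrow> real vec" and \<alpha> \<alpha>perp :: "real mat"
  assumes k: "k \<ge> 1" and a: "\<alpha> \<in> carrier_mat p r" and ap: "\<alpha>perp \<in> carrier_mat p (p - r)" and rp: "r \<le> p"
    and ic: "in_class p k r \<alpha> bbar \<rho> c f \<theta>" and f0: "\<forall>z\<in>carrier_vec p. f 0 z \<in> carrier_vec p"
    and C: "0 \<le> C" "\<forall>Th Gv. stable_increments p k r \<alpha> bbar \<rho> Th Gv \<longrightarrow>
      (\<forall>w\<in>carrier_vec p. \<forall>w'\<in>carrier_vec p.
        vnorm (w - w') \<le> C * vnorm (chi_core p k \<alpha>perp Th Gv w - chi_core p k \<alpha>perp Th Gv w'))"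
  shows "vhomeo p (chi_map p k \<alpha>perp f \<theta>)"
    and "bilip p (f 0) Cf \<Longrightarrow> p > 0 \<Longrightarrow> bilip p (chi_map p k \<alpha>perp f \<theta>)
      ((mat_abs_sum (transpose_mat \<alpha>perp) * (1 + real (p * (k - 1)) * bbar) + bbar + C + 1) * Cf)"
proof -
  let ?L = "mat_abs_sum (transpose_mat \<alpha>perp) * (1 + real (p * (k - 1)) * bbar) + bbar"
  let ?f0' = "the_inv_into (carrier_vec p) (f 0)"
  let ?\<Psi> = "chi_core p k \<alpha>perp (\<lambda>w. \<theta> (?f0' w)) (\<lambda>w. gvec p k f (?f0' w))"
  note hyp = in_class_stable_increments[OF k a ic]
  have h0: "vhomeo p (f 0)" using ic by (simp add: in_class_def)
  then have bij0: "bij_betw (f 0) (carrier_vec p) (carrier_vec p)" by (simp add: vhomeo_def)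
  have chi: "chi_map p k \<alpha>perp f \<theta> z = ?\<Psi> (f 0 z)" if "z \<in> carrier_vec p" for z
    by (rule chi_map_eq_chi_core[of f p z k \<alpha>perp \<theta>, OF bij0 that])
  have L: "0 \<le> ?L"
    using stable_increments_bbar_nonneg[OF hyp] mat_abs_sum_nonneg[of "transpose_mat \<alpha>perp"]
    by (intro add_nonneg_nonneg mult_nonneg_nonneg) auto
  have \<Psi>: "\<forall>w\<in>carrier_vec p. ?\<Psi> w \<in> carrier_vec p"
    by (intro ballI chi_core_carrier[OF ap rp] stable_increments_carrier(1)[OF hyp])
  have up: "\<forall>w\<in>carrier_vec p. \<forall>w'\<in>carrier_vec p. vnorm (?\<Psi> w - ?\<Psi> w') \<le> ?L * vnorm (w - w')"
    using vnorm_chi_core_diff_le[OF hyp ap] by blast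
  have low: "\<forall>w\<in>carrier_vec p. \<forall>w'\<in>carrier_vec p. vnorm (w - w') \<le> C * vnorm (?\<Psi> w - ?\<Psi> w')"
    using C(2) hyp by blast
  show "vhomeo p (chi_map p k \<alpha>perp f \<theta>)"
    by (rule vhomeo_cong[OF vhomeo_compose[OF h0 bilipschitz_imp_vhomeo[OF \<Psi> up low]] chi])
  assume bl: "bilip p (f 0) Cf" and p: "p > 0"
  have "Cf > 0" using bilip_pos[OF bl f0 bij_betw_imp_inj_on[OF bij0] p] .
  then show "bilip p (chi_map p k \<alpha>perp f \<theta>) ((?L + C + 1) * Cf)"
    by (rule bilip_cong[OF bilip_compose[OF bl _ f0 L C(1) up low] chi])
qed

theorem lemmaB4:
  fixes p k r :: nat and \<alpha> \<alpha>perp :: "real mat" and bbar rhobar :: real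
  assumes "p \<ge> 1" and "k \<ge> 1" and "r < p"
    and "\<alpha> \<in> carrier_mat p r" and "vec_space.rank p \<alpha> = r"
    and "\<alpha>perp \<in> carrier_mat p (p - r)" and "vec_space.rank p \<alpha>perp = p - r"
    and "transpose_mat \<alpha>perp * \<alpha> = 0\<^sub>m (p - r) r"
    and "rhobar < 1"
  shows
    "(\<forall>c f \<theta>. c \<in> carrier_vec p
        \<and> (\<forall>i\<le>k. (\<forall>z\<in>carrier_vec p. f i z \<in> carrier_vec p) \<and> f i (0\<^sub>v p) = 0\<^sub>v p)
        \<and> in_class p k r \<alpha> bbar rhobar c f \<theta>
      \<longrightarrow> (\<forall>i\<in>{1..k-1}. vcont_on p (f i)) \<and> vhomeo p (chi_map p k \<alpha>perp f \<theta>))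
   \<and> (\<exists>K :: real \<Rightarrow> real. \<forall>Cf c f \<theta>. c \<in> carrier_vec p
        \<and> (\<forall>i\<le>k. (\<forall>z\<in>carrier_vec p. f i z \<in> carrier_vec p) \<and> f i (0\<^sub>v p) = 0\<^sub>v p)
        \<and> in_class p k r \<alpha> bbar rhobar c f \<theta> \<and> bilip p (f 0) Cf
      \<longrightarrow> bilip p (chi_map p k \<alpha>perp f \<theta>) (K Cf))"
proof -
  let ?L = "mat_abs_sum (transpose_mat \<alpha>perp) * (1 + real (p * (k - 1)) * bbar) + bbar"
  have p: "p > 0" and rp: "r \<le> p" using assms(1,3) by auto
  have ainj: "\<forall>y\<in>carrier_vec r. \<alpha> *\<^sub>v y = 0\<^sub>v p \<longrightarrow> y = 0\<^sub>v r"
    using full_rank_imp_inj[OF assms(4,5)] by blast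
  have apinj: "\<forall>x\<in>carrier_vec (p - r). \<alpha>perp *\<^sub>v x = 0\<^sub>v p \<longrightarrow> x = 0\<^sub>v (p - r)"
    using full_rank_imp_inj[OF assms(6,7)] by blast
  obtain C where C: "0 \<le> C" "\<forall>Th Gv. stable_increments p k r \<alpha> bbar rhobar Th Gv \<longrightarrow>
    (\<forall>w\<in>carrier_vec p. \<forall>w'\<in>carrier_vec p.
      vnorm (w - w') \<le> C * vnorm (chi_core p k \<alpha>perp Th Gv w - chi_core p k \<alpha>perp Th Gv w'))"
    by (rule chi_core_co_lipschitz[OF p rp assms(9,4,6) ainj apinj assms(8)])
  note chi = in_class_chi_vhomeo_bilip[OF assms(2,4,6) rp _ _ C]
  show ?thesis
  proof (intro conjI allI impI exI[of _ "\<lambda>Cf. (?L + C + 1) * Cf"]; elim conjE)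
    fix c f \<theta>
    assume fc: "\<forall>i\<le>k. (\<forall>z\<in>carrier_vec p. f i z \<in> carrier_vec p) \<and> f i (0\<^sub>v p) = 0\<^sub>v p"
      and ic: "in_class p k r \<alpha> bbar rhobar c f \<theta>"
    show "\<forall>i\<in>{1..k - 1}. vcont_on p (f i)"
      using in_class_f_continuous[OF assms(2,4) ic] fc by blast
    show "vhomeo p (chi_map p k \<alpha>perp f \<theta>)" using chi(1)[OF ic] fc by blast
  next
    fix Cf c f \<theta>
    assume fc: "\<forall>i\<le>k. (\<forall>z\<in>carrier_vec p. f i z \<in> carrier_vec p) \<and> f i (0\<^sub>v p) = 0\<^sub>v p"
      and ic: "in_class p k r \<alpha> bbar rhobar c f \<theta>" and bl: "bilip p (f 0) Cf"
    show "bilip p (chi_map p k \<alpha>perp f \<theta>) ((?L + C + 1) * Cf)" using chi(2)[OF ic _ bl p] fc by blast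
  qed
qed

end
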